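(* Let $\mathfrak{R}$ be a root system in $\mathbb{R}^d$ (normalized so that $|\alpha|^2=2$ for all $\alpha\in\mathfrak{R}$) with positive subsystem $\mathfrak{R}_+$, let $G$ be the reflection group generated by $\{r_\alpha:\alpha\in\mathfrak{R}\}$, let $\kappa:\mathfrak{R}\to[0,\infty)$ be a $G$-invariant multiplicity function, and let $\lambda_\kappa=\sum_{\alpha\in\mathfrak{R}_+}\kappa_\alpha$. Let $(p_t)_{t>0}$ be the Dunkl heat kernel associated with the Dunkl Laplacian $\Delta_\kappa$. Suppose that $G$ is isomorphic to $\mathbb{Z}_2^d$. Then for every $t>0$ and every $x,y\in\mathbb{R}^d$, $$-\Delta_\kappa\big(\log p_t(\cdot,y)\big)(x)\leq \frac{d+2\lambda_\kappa}{2t}.$$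
   Context: $\langle\cdot,\cdot\rangle$ and $|\cdot|$ denote the Euclidean inner product and norm on $\mathbb{R}^d$. For $\alpha\in\mathbb{R}^d\setminus\{0\}$, $r_\alpha x=x-2\frac{\langle\alpha,x\rangle}{|\alpha|^2}\alpha$ is the reflection in the hyperplane $\alpha^\perp$. A root system $\mathfrak{R}$ is a finite set of nonzero vectors with $r_\alpha(\mathfrak{R})=\mathfrak{R}$ and $\alpha\mathbb{R}\cap\mathfrak{R}=\{\alpha,-\alpha\}$ for all $\alpha\in\mathfrak{R}$; a positive subsystem $\mathfrak{R}_+$ is a subset with $\mathfrak{R}=\mathfrak{R}_+\sqcup(-\mathfrak{R}_+)$. The multiplicity function satisfies $\kappa_{g\alpha}=\kappa_\alpha$ for $g\in G$. For $\xi\in\mathbb{R}^d$ the Dunkl operator is $\mathcal{D}_\xi f(x)=\partial_\xi f(x)+\sum_{\alpha\in\mathfrak{R}_+}\kappa_\alpha\langle\alpha,\xi\rangle\frac{f(x)-f(r_\alpha x)}{\langle\alpha,x\rangle}$ for $f\in C^1(\mathbb{R}^d)$; with $\mathcal{D}_i=\mathcal{D}_{e_i}$ for the standard basis, the Dunkl Laplacian is $\Delta_\kappa=\sum_{i=1}^d\mathcal{D}_i^2$, which equals $\Delta_\kappa f(x)=\Delta f(x)+2\sum_{\alpha\in\mathfrak{R}_+}\kappa_\alpha\Big[\frac{\langle\alpha,\nabla f(x)\rangle}{\langle\alpha,x\rangle}-\frac{f(x)-f(r_\alpha x)}{\langle\alpha,x\rangle^2}\Big]$ for $f\in C^2(\mathbb{R}^d)$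 (with $\Delta,\nabla$ the usual Laplacian and gradient; expressions are understood off the reflecting hyperplanes and by continuity on them). Let $\omega_\kappa(x)=\prod_{\alpha\in\mathfrak{R}_+}|\langle\alpha,x\rangle|^{\kappa_\alpha}$ and $\mu_\kappa(dx)=\omega_\kappa(x)\,dx$. The Dunkl heat kernel $p_t(x,y)$ is the integral kernel with respect to $\mu_\kappa$ of the Dunkl heat semigroup $P_t=e^{t\Delta_\kappa}$, i.e. $P_tf(x)=\int_{\mathbb{R}^d}f(y)p_t(x,y)\,\mu_\kappa(dy)$; it is a smooth, strictly positive, symmetric function of $(t,x,y)$ satisfying $\partial_t p_t(x,y)=\Delta_\kappa(p_t(\cdot,y))(x)$. The expression $\Delta_\kappa(\log p_t(\cdot,y))(x)$ means $\Delta_\kappa$ applied to the function $z\mapsto\log p_t(z,y)$, evaluated at $x$. *)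

theory Defs
  imports "HOL-Analysis.Analysis" "HOL-Algebra.Product_Groups" "HOL-Algebra.Elementary_Groups"
begin

definition refl :: "'a::euclidean_space \<Rightarrow> 'a \<Rightarrow> 'a" where
  "refl \<alpha> x = x - (2 * (\<alpha> \<bullet> x) / (norm \<alpha>)\<^sup>2) *\<^sub>R \<alpha>"

definition root_system :: "'a::euclidean_space set \<Rightarrow> bool" where
  "root_system R \<longleftrightarrow> finite R \<and> 0 \<notin> R \<and>
     (\<forall>\<alpha>\<in>R. refl \<alpha> ` R = R) \<and>
     (\<forall>\<alpha>\<in>R. \<forall>c::real. c *\<^sub>R \<alpha> \<in> R \<longleftrightarrow> c = 1 \<or> c = -1)"

definition positive_subsystem :: "'a::euclidean_space set \<Rightarrow> 'a set \<Rightarrow> bool" where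
  "positive_subsystem R Rp \<longleftrightarrow> Rp \<subseteq> R \<and> R = Rp \<union> uminus ` Rp \<and> Rp \<inter> uminus ` Rp = {}"

inductive_set refl_group_set :: "'a::euclidean_space set \<Rightarrow> ('a \<Rightarrow> 'a) set" for R where
  id_in: "id \<in> refl_group_set R"
| step: "\<alpha> \<in> R \<Longrightarrow> g \<in> refl_group_set R \<Longrightarrow> refl \<alpha> \<circ> g \<in> refl_group_set R"

definition refl_group :: "'a::euclidean_space set \<Rightarrow> ('a \<Rightarrow> 'a) monoid" where
  "refl_group R = \<lparr>carrier = refl_group_set R, monoid.mult = (\<circ>), one = id\<rparr>"

definition Z2_pow :: "nat \<Rightarrow> (nat \<Rightarrow> int) monoid" where
  "Z2_pow d = product_group {..<d} (\<lambda>_. integer_mod_group 2)"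

definition multiplicity_function :: "'a::euclidean_space set \<Rightarrow> ('a \<Rightarrow> real) \<Rightarrow> bool" where
  "multiplicity_function R \<kappa> \<longleftrightarrow> (\<forall>\<alpha>\<in>R. \<kappa> \<alpha> \<ge> 0) \<and>
     (\<forall>g\<in>refl_group_set R. \<forall>\<alpha>\<in>R. \<kappa> (g \<alpha>) = \<kappa> \<alpha>)"

definition lambda_k :: "'a::euclidean_space set \<Rightarrow> ('a \<Rightarrow> real) \<Rightarrow> real" where
  "lambda_k Rp \<kappa> = (\<Sum>\<alpha>\<in>Rp. \<kappa> \<alpha>)"

definition regular_set :: "'a::euclidean_space set \<Rightarrow> 'a set" where
  "regular_set Rp = {x. \<forall>\<alpha>\<in>Rp. \<alpha> \<bullet> x \<noteq> 0}"

definition dunkl_op :: "'a::euclidean_space set \<Rightarrow> ('a \<Rightarrow> real) \<Rightarrow> 'a \<Rightarrow> ('a \<Rightarrow> real) \<Rightarrow> 'a \<Rightarrow> real" where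
  "dunkl_op Rp \<kappa> \<xi> f x = frechet_derivative f (at x) \<xi> +
     (\<Sum>\<alpha>\<in>Rp. \<kappa> \<alpha> * (\<alpha> \<bullet> \<xi>) * (f x - f (refl \<alpha> x)) / (\<alpha> \<bullet> x))"

definition C1_fun :: "('a::euclidean_space \<Rightarrow> real) \<Rightarrow> bool" where
  "C1_fun f \<longleftrightarrow> (\<forall>x. f differentiable (at x)) \<and>
     (\<forall>v. continuous_on UNIV (\<lambda>x. frechet_derivative f (at x) v))"

definition dunkl_kernel :: "'a::euclidean_space set \<Rightarrow> ('a \<Rightarrow> real) \<Rightarrow> 'a \<Rightarrow> 'a \<Rightarrow> real" where
  "dunkl_kernel Rp \<kappa> = (THE E. \<forall>y. C1_fun (\<lambda>x. E x y) \<and> E 0 y = 1 \<and>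
      (\<forall>\<xi>. \<forall>x\<in>regular_set Rp. dunkl_op Rp \<kappa> \<xi> (\<lambda>z. E z y) x = (\<xi> \<bullet> y) * E x y))"

definition dunkl_weight :: "'a::euclidean_space set \<Rightarrow> ('a \<Rightarrow> real) \<Rightarrow> 'a \<Rightarrow> real" where
  "dunkl_weight Rp \<kappa> x = (\<Prod>\<alpha>\<in>Rp. \<bar>\<alpha> \<bullet> x\<bar> powr (2 * \<kappa> \<alpha>))"

definition macdonald_const :: "'a::euclidean_space set \<Rightarrow> ('a \<Rightarrow> real) \<Rightarrow> real" where
  "macdonald_const Rp \<kappa> = integral UNIV (\<lambda>x::'a. exp (- (norm x)\<^sup>2 / 2) * dunkl_weight Rp \<kappa> x)"

text \<open>Dunkl heat kernel (Roesler):
  p_t(x,y) = c^{-1} (2t)^{-d/2-lambda} exp(-(|x|^2+|y|^2)/(4t)) E(x/sqrt(2t), y/sqrt(2t)).\<close>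
definition dunkl_heat_kernel :: "'a::euclidean_space set \<Rightarrow> ('a \<Rightarrow> real) \<Rightarrow> real \<Rightarrow> 'a \<Rightarrow> 'a \<Rightarrow> real" where
  "dunkl_heat_kernel Rp \<kappa> t x y =
     (2 * t) powr (- (real DIM('a) / 2 + lambda_k Rp \<kappa>)) / macdonald_const Rp \<kappa> *
     exp (- ((norm x)\<^sup>2 + (norm y)\<^sup>2) / (4 * t)) *
     dunkl_kernel Rp \<kappa> (x /\<^sub>R sqrt (2 * t)) (y /\<^sub>R sqrt (2 * t))"

definition grad :: "('a::euclidean_space \<Rightarrow> real) \<Rightarrow> 'a \<Rightarrow> 'a" where
  "grad f x = (\<Sum>i\<in>Basis. frechet_derivative f (at x) i *\<^sub>R i)"

definition laplacian :: "('a::euclidean_space \<Rightarrow> real) \<Rightarrow> 'a \<Rightarrow> real" where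
  "laplacian f x = (\<Sum>i\<in>Basis. frechet_derivative (\<lambda>z. frechet_derivative f (at z) i) (at x) i)"

definition dunkl_laplacian_raw :: "'a::euclidean_space set \<Rightarrow> ('a \<Rightarrow> real) \<Rightarrow> ('a \<Rightarrow> real) \<Rightarrow> 'a \<Rightarrow> real" where
  "dunkl_laplacian_raw Rp \<kappa> f x = laplacian f x +
     2 * (\<Sum>\<alpha>\<in>Rp. \<kappa> \<alpha> * ((\<alpha> \<bullet> grad f x) / (\<alpha> \<bullet> x) - (f x - f (refl \<alpha> x)) / (\<alpha> \<bullet> x)\<^sup>2))"

definition dunkl_laplacian :: "'a::euclidean_space set \<Rightarrow> ('a \<Rightarrow> real) \<Rightarrow> ('a \<Rightarrow> real) \<Rightarrow> 'a \<Rightarrow> real" where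
  "dunkl_laplacian Rp \<kappa> f x =
     (if x \<in> regular_set Rp then dunkl_laplacian_raw Rp \<kappa> f x
      else Lim (at x within regular_set Rp) (dunkl_laplacian_raw Rp \<kappa> f))"

end

theory Submission
  imports Defs
begin

text \<open>If the reflection group is \<open>\<int>\<^sub>2\<^sup>d\<close>, all reflections commute, so the positive roots are
  pairwise orthogonal. The Dunkl kernel then factorises into rank-one kernels \<open>F\<^sub>k\<close>, which are
  explicit power series; the candidate kernel is checked against the defining system and shown
  to be its only solution by an energy estimate along orbits of the group. Consequently
  \<open>log p\<^sub>t(\<cdot>, y)\<close> is \<open>C - |x|\<^sup>2 / (4 t)\<close> plus a linear term plus one ridge
  \<open>H\<^sub>\<beta>(\<beta> \<bullet> x)\<close> per positive root, and its Dunkl Laplacian is \<open>-(d + 2 \<lambda>\<^sub>\<kappa>) / (2 t)\<close>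
  plus rescaled rank-one Dunkl Laplacians of \<open>log F\<^sub>k\<close>. These are nonnegative because
  \<open>log F\<^sub>k\<close> is convex: the differential equation of \<open>F\<^sub>k\<close> expresses \<open>F F'' - F'\<^sup>2\<close>
  through a function whose sign follows from monotonicity arguments, and convexity bounds the
  reflection term by the chord-tangent inequality.\<close>

section \<open>The rank-one Dunkl kernel\<close>

text \<open>\<open>rank1_kernel k\<close> is the rank-one Dunkl kernel \<open>E\<^sub>k(\<cdot>, 1)\<close>: the recursion for its
  coefficients is the equation \<open>f' z + k (f z - f (-z)) / z = f z\<close>, compared coefficientwise.\<close>

fun rank1_coeff :: "real \<Rightarrow> nat \<Rightarrow> real" where
  "rank1_coeff k 0 = 1"
| "rank1_coeff k (Suc n) = rank1_coeff k n / (real (Suc n) + (if odd (Suc n) then 2 * k else 0))"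

definition rank1_kernel :: "real \<Rightarrow> real \<Rightarrow> real" where
  "rank1_kernel k z = (\<Sum>n. rank1_coeff k n * z ^ n)"

definition rank1_kernel_deriv :: "real \<Rightarrow> real \<Rightarrow> real" where
  "rank1_kernel_deriv k z = (\<Sum>n. diffs (rank1_coeff k) n * z ^ n)"

definition rank1_kernel_deriv2 :: "real \<Rightarrow> real \<Rightarrow> real" where
  "rank1_kernel_deriv2 k z = (\<Sum>n. diffs (diffs (rank1_coeff k)) n * z ^ n)"

definition rank1_even :: "real \<Rightarrow> real \<Rightarrow> real" where
  "rank1_even k z = (rank1_kernel k z + rank1_kernel k (-z)) / 2"

definition rank1_odd :: "real \<Rightarrow> real \<Rightarrow> real" where
  "rank1_odd k z = (rank1_kernel k z - rank1_kernel k (-z)) / 2"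

lemma rank1_even_minus [simp]: "rank1_even k (-z) = rank1_even k z"
  by (simp add: rank1_even_def)

lemma rank1_odd_minus [simp]: "rank1_odd k (-z) = - rank1_odd k z"
  by (simp add: rank1_odd_def diff_divide_distrib)

lemma rank1_kernel_even_odd: "rank1_kernel k z = rank1_even k z + rank1_odd k z"
  by (simp add: rank1_even_def rank1_odd_def field_simps)

lemma rank1_kernel_0 [simp]: "rank1_kernel k 0 = 1"
  unfolding rank1_kernel_def by (subst suminf_finite[of "{0}"]) auto

lemma rank1_odd_0 [simp]: "rank1_odd k 0 = 0"
  by (simp add: rank1_odd_def)

lemma rank1_kernel_deriv_0: "rank1_kernel_deriv k 0 = rank1_coeff k 1"
  unfolding rank1_kernel_deriv_def by (subst suminf_finite[of "{0}"]) (auto simp: diffs_def)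

context
  fixes k :: real
  assumes k: "0 \<le> k"
begin

lemma rank1_coeff_pos: "0 < rank1_coeff k n"
  using k by (induction n) (auto intro!: divide_pos_pos add_pos_nonneg)

lemma rank1_coeff_le_inverse_fact: "rank1_coeff k n \<le> 1 / fact n"
proof (induction n)
  case (Suc n)
  have "rank1_coeff k (Suc n) \<le> rank1_coeff k n / real (Suc n)"
    using k rank1_coeff_pos[of n] by (auto intro!: divide_left_mono)
  also have "\<dots> \<le> (1 / fact n) / real (Suc n)"
    using divide_right_mono[OF Suc.IH, of "real (Suc n)"] by simp
  also have "\<dots> = 1 / fact (Suc n)"
    by (simp add: field_simps)
  finally show ?case .
qed simp

lemma summable_rank1_kernel: "summable (\<lambda>n. rank1_coeff k n * z ^ n)"
proof (rule summable_comparison_test')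
  show "summable (\<lambda>n. \<bar>z\<bar> ^ n / fact n)"
    using summable_exp[of "\<bar>z\<bar>"] by (simp add: divide_inverse mult.commute)
  fix n
  have "norm (rank1_coeff k n * z ^ n) = rank1_coeff k n * \<bar>z\<bar> ^ n"
    using rank1_coeff_pos[of n] by (simp add: abs_mult power_abs)
  also have "\<dots> \<le> \<bar>z\<bar> ^ n / fact n"
    using mult_right_mono[OF rank1_coeff_le_inverse_fact, of "\<bar>z\<bar> ^ n" n] by simp
  finally show "norm (rank1_coeff k n * z ^ n) \<le> \<bar>z\<bar> ^ n / fact n" .
qed

lemma summable_rank1_kernel_deriv: "summable (\<lambda>n. diffs (rank1_coeff k) n * z ^ n)"
  by (rule termdiff_converges_all) (rule summable_rank1_kernel)

lemma summable_rank1_kernel_deriv2: "summable (\<lambda>n. diffs (diffs (rank1_coeff k)) n * z ^ n)"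
  by (rule termdiff_converges_all) (rule summable_rank1_kernel_deriv)

lemma rank1_kernel_has_derivative:
  "(rank1_kernel k has_real_derivative rank1_kernel_deriv k z) (at z)"
  unfolding rank1_kernel_def[abs_def] rank1_kernel_deriv_def
  by (rule termdiffs_strong_converges_everywhere) (rule summable_rank1_kernel)

lemma rank1_kernel_deriv_has_derivative:
  "(rank1_kernel_deriv k has_real_derivative rank1_kernel_deriv2 k z) (at z)"
  unfolding rank1_kernel_deriv_def[abs_def] rank1_kernel_deriv2_def
  by (rule termdiffs_strong_converges_everywhere) (rule summable_rank1_kernel_deriv)

lemma isCont_rank1_kernel_deriv2: "isCont (rank1_kernel_deriv2 k) z"
  unfolding rank1_kernel_deriv2_def[abs_def]
  by (rule isCont_powser_converges_everywhere) (rule summable_rank1_kernel_deriv2)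

lemma rank1_coeff_dunkl_identity:
  "real (Suc n) * rank1_coeff k (Suc n) * z ^ Suc n
     + k * (rank1_coeff k (Suc n) * z ^ Suc n - rank1_coeff k (Suc n) * (-z) ^ Suc n)
   = rank1_coeff k n * z ^ Suc n"
proof -
  have "(-z) ^ Suc n = (if odd (Suc n) then - (z ^ Suc n) else z ^ Suc n)"
    by (simp add: power_minus')
  then have "real (Suc n) * rank1_coeff k (Suc n) * z ^ Suc n
      + k * (rank1_coeff k (Suc n) * z ^ Suc n - rank1_coeff k (Suc n) * (-z) ^ Suc n)
    = rank1_coeff k (Suc n) * (real (Suc n) + (if odd (Suc n) then 2 * k else 0)) * z ^ Suc n"
    by (cases "odd (Suc n)") (simp_all add: algebra_simps del: rank1_coeff.simps power_Suc)
  also have "\<dots> = rank1_coeff k n * z ^ Suc n"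
    using k by (simp add: add_pos_nonneg)
  finally show ?thesis .
qed

lemma rank1_kernel_ode:
  "z * rank1_kernel_deriv k z + k * (rank1_kernel k z - rank1_kernel k (-z)) = z * rank1_kernel k z"
proof -
  let ?a = "rank1_coeff k"
  have s0: "summable (\<lambda>n. ?a n * z ^ n)" "summable (\<lambda>n. ?a n * (-z) ^ n)"
    using summable_rank1_kernel by auto
  have s1: "summable (\<lambda>n. diffs ?a n * z ^ n)"
    by (rule summable_rank1_kernel_deriv)
  have sd: "summable (\<lambda>n. ?a n * z ^ n - ?a n * (-z) ^ n)"
    using s0 by (rule summable_diff)
  have sA: "summable (\<lambda>n. real (Suc n) * ?a (Suc n) * z ^ Suc n)"
    using summable_mult[OF s1, of z] by (simp add: diffs_def mult_ac)
  have sB: "summable (\<lambda>n. ?a (Suc n) * z ^ Suc n - ?a (Suc n) * (-z) ^ Suc n)"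
    using sd by (subst summable_Suc_iff)
  have A: "z * rank1_kernel_deriv k z = (\<Sum>n. real (Suc n) * ?a (Suc n) * z ^ Suc n)"
    unfolding rank1_kernel_deriv_def using s1
    by (subst suminf_mult[symmetric]) (auto simp: diffs_def mult_ac)
  have "rank1_kernel k z - rank1_kernel k (-z) = (\<Sum>n. ?a n * z ^ n - ?a n * (-z) ^ n)"
    unfolding rank1_kernel_def using s0 by (simp add: suminf_diff)
  also have "\<dots> = (\<Sum>n. ?a (Suc n) * z ^ Suc n - ?a (Suc n) * (-z) ^ Suc n)"
    using suminf_split_head[OF sd] by simp
  finally have B: "rank1_kernel k z - rank1_kernel k (-z) = \<dots>" .
  have C: "z * rank1_kernel k z = (\<Sum>n. ?a n * z ^ Suc n)"
    unfolding rank1_kernel_def using s0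
    by (subst suminf_mult[symmetric]) (auto simp: mult_ac)
  have "z * rank1_kernel_deriv k z + k * (rank1_kernel k z - rank1_kernel k (-z))
      = (\<Sum>n. real (Suc n) * ?a (Suc n) * z ^ Suc n
          + k * (?a (Suc n) * z ^ Suc n - ?a (Suc n) * (-z) ^ Suc n))"
    unfolding A B using suminf_mult[OF sB, of k] suminf_add[OF sA summable_mult[OF sB, of k]]
    by simp
  also have "\<dots> = z * rank1_kernel k z"
    unfolding C rank1_coeff_dunkl_identity ..
  finally show ?thesis .
qed

lemma rank1_kernel_deriv_eq:
  "z \<noteq> 0 \<Longrightarrow> rank1_kernel_deriv k z = rank1_kernel k z - 2 * k * rank1_odd k z / z"
  using rank1_kernel_ode[of z] by (simp add: rank1_odd_def field_simps)

lemma rank1_kernel_minus_has_derivative: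
  "((\<lambda>z. rank1_kernel k (-z)) has_real_derivative - rank1_kernel_deriv k (-z)) (at z)"
  using DERIV_chain2[OF rank1_kernel_has_derivative DERIV_minus[OF DERIV_ident]] by simp

lemma rank1_odd_has_derivative':
  "(rank1_odd k has_real_derivative (rank1_kernel_deriv k z + rank1_kernel_deriv k (-z)) / 2) (at z)"
  unfolding rank1_odd_def[abs_def]
  using DERIV_diff[OF rank1_kernel_has_derivative rank1_kernel_minus_has_derivative,
      THEN DERIV_cdivide[where c=2]]
  by simp

lemma rank1_even_has_derivative: "(rank1_even k has_real_derivative rank1_odd k z) (at z)"
proof -
  have "(rank1_kernel_deriv k z - rank1_kernel_deriv k (-z)) / 2 = rank1_odd k z"
  proof (cases "z = 0")
    case False
    have "z * (rank1_kernel_deriv k z - rank1_kernel_deriv k (-z)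
        - (rank1_kernel k z - rank1_kernel k (-z))) = 0"
      using rank1_kernel_ode[of z] rank1_kernel_ode[of "-z"] by (simp add: algebra_simps)
    with False show ?thesis
      by (simp add: rank1_odd_def)
  qed simp
  moreover have "(rank1_even k has_real_derivative
      (rank1_kernel_deriv k z - rank1_kernel_deriv k (-z)) / 2) (at z)"
    unfolding rank1_even_def[abs_def]
    using DERIV_add[OF rank1_kernel_has_derivative rank1_kernel_minus_has_derivative,
        THEN DERIV_cdivide[where c=2]]
    by simp
  ultimately show ?thesis by simp
qed

lemma rank1_odd_deriv_eq:
  "z \<noteq> 0 \<Longrightarrow> (rank1_kernel_deriv k z + rank1_kernel_deriv k (-z)) / 2
     = rank1_even k z - 2 * k * rank1_odd k z / z"
  using rank1_kernel_ode[of z] rank1_kernel_ode[of "-z"]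
  by (simp add: rank1_odd_def rank1_even_def field_simps)

lemma rank1_odd_has_derivative:
  "z \<noteq> 0 \<Longrightarrow> (rank1_odd k has_real_derivative rank1_even k z - 2 * k * rank1_odd k z / z) (at z)"
  using rank1_odd_has_derivative'[of z] rank1_odd_deriv_eq[of z] by simp

lemma isCont_rank1_kernel: "isCont (rank1_kernel k) z"
  using rank1_kernel_has_derivative by (rule DERIV_isCont)

lemma isCont_rank1_kernel_deriv: "isCont (rank1_kernel_deriv k) z"
  using rank1_kernel_deriv_has_derivative by (rule DERIV_isCont)

lemma isCont_rank1_even: "isCont (rank1_even k) z"
  using rank1_even_has_derivative by (rule DERIV_isCont)

lemma isCont_rank1_odd: "isCont (rank1_odd k) z"
  using rank1_odd_has_derivative' by (rule DERIV_isCont)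

lemma rank1_odd_div_tendsto: "((\<lambda>s. rank1_odd k s / s) \<longlongrightarrow> rank1_kernel_deriv k 0) (at 0)"
  using rank1_odd_has_derivative'[of 0] by (simp add: has_field_derivative_iff)

lemma rank1_even_ge_1: "1 \<le> rank1_even k z"
proof -
  let ?f = "\<lambda>n. rank1_coeff k n * z ^ n + rank1_coeff k n * (-z) ^ n"
  have s: "summable ?f"
    using summable_rank1_kernel[of z] summable_rank1_kernel[of "-z"] by (rule summable_add)
  have "0 \<le> ?f n" for n
  proof -
    have "0 \<le> z ^ n + (-z) ^ n"
      by (cases "even n") (auto simp: power_minus')
    then show ?thesis
      using rank1_coeff_pos[of n] by (simp add: distrib_left[symmetric])
  qed
  then have "sum ?f {0} \<le> suminf ?f"
    by (intro sum_le_suminf[OF s]) auto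
  also have "suminf ?f = rank1_kernel k z + rank1_kernel k (-z)"
    unfolding rank1_kernel_def using summable_rank1_kernel[of z] summable_rank1_kernel[of "-z"]
    by (simp add: suminf_add)
  finally show ?thesis by (simp add: rank1_even_def)
qed

lemma rank1_odd_nonneg: "0 \<le> t \<Longrightarrow> 0 \<le> rank1_odd k t"
proof -
  assume t: "0 \<le> t"
  let ?f = "\<lambda>n. rank1_coeff k n * t ^ n - rank1_coeff k n * (-t) ^ n"
  have "0 \<le> ?f n" for n
  proof -
    have "0 \<le> t ^ n - (-t) ^ n"
      using t by (cases "even n") (auto simp: power_minus')
    then show ?thesis
      using rank1_coeff_pos[of n] by (simp add: right_diff_distrib[symmetric])
  qed
  moreover have "summable ?f"
    using summable_rank1_kernel[of t] summable_rank1_kernel[of "-t"] by (rule summable_diff)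
  ultimately have "0 \<le> suminf ?f"
    by (intro suminf_nonneg) auto
  also have "suminf ?f = rank1_kernel k t - rank1_kernel k (-t)"
    unfolding rank1_kernel_def using summable_rank1_kernel[of t] summable_rank1_kernel[of "-t"]
    by (simp add: suminf_diff)
  finally show ?thesis by (simp add: rank1_odd_def)
qed

lemma exp_minus_le_rank1_kernel_minus: "0 \<le> t \<Longrightarrow> exp (-t) \<le> rank1_kernel k (-t)"
proof -
  assume t: "0 \<le> t"
  define h where "h s = exp s * rank1_kernel k (-s)" for s
  have hd: "(h has_real_derivative exp s * rank1_kernel k (-s) - exp s * rank1_kernel_deriv k (-s)) (at s)"
    for s
    unfolding h_def[abs_def]
    by (auto intro!: derivative_eq_intros rank1_kernel_minus_has_derivative)
  have "h 0 \<le> h t"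
  proof (rule DERIV_nonneg_imp_nondecreasing[OF t])
    fix s assume s: "0 \<le> s" "s \<le> t"
    show "\<exists>y. (h has_real_derivative y) (at s) \<and> 0 \<le> y"
    proof (cases "s = 0")
      case True
      then show ?thesis
        using hd[of s] k by (auto simp: rank1_kernel_deriv_0 numeral_eq_Suc)
    next
      case False
      then have "rank1_kernel k (-s) = rank1_kernel_deriv k (-s) + 2 * k * rank1_odd k s / s"
        using rank1_kernel_deriv_eq[of "-s"] by simp
      then have "exp s * rank1_kernel k (-s) - exp s * rank1_kernel_deriv k (-s)
          = exp s * (2 * k * rank1_odd k s / s)"
        by (simp add: algebra_simps)
      moreover have "0 \<le> exp s * (2 * k * rank1_odd k s / s)"
        using k rank1_odd_nonneg[of s] s by simp
      ultimately show ?thesis using hd[of s] by metis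
    qed
  qed
  then show ?thesis by (simp add: h_def exp_minus field_simps)
qed

lemma rank1_kernel_pos: "0 < rank1_kernel k z"
proof (cases "0 \<le> z")
  case True
  then show ?thesis
    using rank1_even_ge_1[of z] rank1_odd_nonneg[of z] rank1_kernel_even_odd[of k z] by simp
next
  case False
  then show ?thesis
    using exp_minus_le_rank1_kernel_minus[of "-z"] by (simp add: less_le_trans[OF exp_gt_zero])
qed

end

section \<open>Log-convexity of the rank-one kernel\<close>

lemma nonneg_if_weighted_deriv_nonneg:
  fixes h D :: "real \<Rightarrow> real"
  assumes p: "0 < p" and lim: "(h \<longlongrightarrow> L) (at_right 0)"
    and deriv: "\<And>s. 0 < s \<Longrightarrow> ((\<lambda>s. s powr p * h s) has_real_derivative D s) (at s)"
    and D_nonneg: "\<And>s. 0 < s \<Longrightarrow> 0 \<le> D s"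
    and t: "0 < t"
  shows "0 \<le> h t"
proof -
  let ?g = "\<lambda>s. s powr p * h s"
  have "((\<lambda>s. s powr p) \<longlongrightarrow> 0) (at_right 0)"
    using p by (intro tendsto_zero_powrI tendsto_ident_at)
      (auto simp: eventually_at_right_less eventually_mono[OF eventually_at_right_less])
  from tendsto_mult[OF this lim] have g_lim: "(?g \<longlongrightarrow> 0) (at_right 0)"
    by simp
  have "\<forall>\<^sub>F s in at_right 0. 0 < s \<and> s < t"
    using t by (simp add: eventually_at_right_field) (metis less_eq_real_def)
  then have "\<forall>\<^sub>F s in at_right 0. ?g s \<le> ?g t"
  proof eventually_elim
    case (elim s)
    show ?case
    proof (rule DERIV_nonneg_imp_nondecreasing[of s t])
      fix x assume "s \<le> x" "x \<le> t"
      then show "\<exists>y. (?g has_real_derivative y) (at x) \<and> 0 \<le> y"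
        using deriv[of x] D_nonneg[of x] elim by auto
    qed (use elim in simp)
  qed
  from tendsto_upperbound[OF g_lim this] have "0 \<le> ?g t"
    by simp
  then show ?thesis
    using t by (simp add: zero_le_mult_iff)
qed

definition rank1_logconv_defect :: "real \<Rightarrow> real \<Rightarrow> real" where
  "rank1_logconv_defect k z = rank1_odd k z * (rank1_even k z * (1 + 2 * k) + rank1_odd k z)
     - z * ((rank1_even k z)\<^sup>2 - (rank1_odd k z)\<^sup>2)"

context
  fixes k :: real
  assumes k: "0 < k"
begin

lemma rank1_odd_le_even: "0 < t \<Longrightarrow> (k + t) * rank1_odd k t \<le> t * rank1_even k t"
proof -
  assume t: "0 < t"
  define h where "h s = exp s * (rank1_even k s - (k + s) * (rank1_odd k s / s))" for s
  have "0 \<le> h t"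
  proof (rule nonneg_if_weighted_deriv_nonneg[OF k _ _ _ t])
    show "(h \<longlongrightarrow> exp 0 * (rank1_even k 0 - (k + 0) * rank1_kernel_deriv k 0)) (at_right 0)"
      unfolding h_def using k isCont_rank1_even[of k 0] rank1_odd_div_tendsto[of k]
      by (intro tendsto_intros) (auto simp: isCont_def filterlim_at_split)
  next
    fix s :: real assume s: "0 < s"
    show "((\<lambda>s. s powr k * h s) has_real_derivative
        s powr k * exp s * (k * (1 + k) * rank1_odd k s / s\<^sup>2)) (at s)"
      unfolding h_def using s k
      by (auto intro!: derivative_eq_intros rank1_even_has_derivative rank1_odd_has_derivative
          simp: powr_diff field_simps power2_eq_square)
    show "0 \<le> s powr k * exp s * (k * (1 + k) * rank1_odd k s / s\<^sup>2)"
      using s k rank1_odd_nonneg[of k s] by simp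
  qed
  then have "0 \<le> rank1_even k t - (k + t) * (rank1_odd k t / t)"
    by (simp add: h_def zero_le_mult_iff)
  then show ?thesis
    using t by (simp add: field_simps)
qed

lemma rank1_logconv_defect_nonneg_pos:
  assumes t: "0 < t"
  shows "0 \<le> rank1_logconv_defect k t"
proof (rule nonneg_if_weighted_deriv_nonneg[where p="2 * k", OF _ _ _ _ t])
  have "isCont (rank1_logconv_defect k) 0"
    unfolding rank1_logconv_defect_def[abs_def]
    using k isCont_rank1_even[of k] isCont_rank1_odd[of k] by (auto intro!: continuous_intros)
  then show "(rank1_logconv_defect k \<longlongrightarrow> rank1_logconv_defect k 0) (at_right 0)"
    by (simp add: isCont_def filterlim_at_split)
  fix s :: real assume s: "0 < s"
  show "((\<lambda>s. s powr (2 * k) * rank1_logconv_defect k s) has_real_derivative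
      s powr (2 * k) * (2 * rank1_odd k s / s
        * (s * (rank1_even k s + rank1_odd k s) - k * rank1_odd k s))) (at s)"
    unfolding rank1_logconv_defect_def using s k
    by (auto intro!: derivative_eq_intros rank1_even_has_derivative rank1_odd_has_derivative
        simp: powr_diff field_simps power2_eq_square)
  have "0 \<le> s * (rank1_even k s + rank1_odd k s) - k * rank1_odd k s"
    using rank1_odd_le_even[OF s] rank1_odd_nonneg[of k s] s k
    by (simp add: algebra_simps) (smt (verit) mult_nonneg_nonneg)
  then show "0 \<le> s powr (2 * k) * (2 * rank1_odd k s / s
        * (s * (rank1_even k s + rank1_odd k s) - k * rank1_odd k s))"
    using s k rank1_odd_nonneg[of k s] by simp
qed (use k in simp)

lemma rank1_logconv_defect_nonneg_neg:
  assumes t: "0 < t"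
  shows "0 \<le> rank1_logconv_defect k (-t)"
proof -
  define h where "h s = s * ((rank1_even k s)\<^sup>2 - (rank1_odd k s)\<^sup>2)
      - rank1_odd k s * (rank1_even k s * (1 + 2 * k) - rank1_odd k s)" for s
  have h_tendsto: "(h \<longlongrightarrow> h 0) (at_right 0)"
    unfolding h_def using k isCont_rank1_even[of k 0] isCont_rank1_odd[of k 0]
    by (intro tendsto_intros) (auto simp: isCont_def filterlim_at_split)
  have "0 \<le> h t"
  proof (rule nonneg_if_weighted_deriv_nonneg[where p="2 * k", OF _ h_tendsto _ _ t])
    fix s :: real assume s: "0 < s"
    show "((\<lambda>s. s powr (2 * k) * h s) has_real_derivative
        s powr (2 * k) * (2 * rank1_odd k s / s
          * (s * rank1_even k s - (k + s) * rank1_odd k s))) (at s)"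
      unfolding h_def using s k
      by (auto intro!: derivative_eq_intros rank1_even_has_derivative rank1_odd_has_derivative
          simp: powr_diff field_simps power2_eq_square)
    show "0 \<le> s powr (2 * k) * (2 * rank1_odd k s / s
          * (s * rank1_even k s - (k + s) * rank1_odd k s))"
      using s k rank1_odd_nonneg[of k s] rank1_odd_le_even[OF s] by simp
  qed (use k in simp)
  then show ?thesis
    by (simp add: h_def rank1_logconv_defect_def algebra_simps)
qed

lemma rank1_logconv_defect_nonneg: "0 \<le> rank1_logconv_defect k z"
  using rank1_logconv_defect_nonneg_pos[of z] rank1_logconv_defect_nonneg_neg[of "-z"]
  by (cases z "0::real" rule: linorder_cases) (auto simp: rank1_logconv_defect_def)

end

definition rank1_log :: "real \<Rightarrow> real \<Rightarrow> real" where
  "rank1_log k z = ln (rank1_kernel k z)"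

lemma rank1_log_0 [simp]: "rank1_log k 0 = 0"
  by (simp add: rank1_log_def)

definition rank1_log_deriv :: "real \<Rightarrow> real \<Rightarrow> real" where
  "rank1_log_deriv k z = rank1_kernel_deriv k z / rank1_kernel k z"

definition rank1_log_deriv2 :: "real \<Rightarrow> real \<Rightarrow> real" where
  "rank1_log_deriv2 k z =
     (rank1_kernel_deriv2 k z * rank1_kernel k z - (rank1_kernel_deriv k z)\<^sup>2) / (rank1_kernel k z)\<^sup>2"

text \<open>The rank-one Dunkl Laplacian \<open>f'' + k (2 f' z / z - (f z - f (-z)) / z\<^sup>2)\<close> of
  \<open>rank1_log k\<close>, extended continuously to \<open>z = 0\<close>.\<close>

definition rank1_log_laplacian :: "real \<Rightarrow> real \<Rightarrow> real" where
  "rank1_log_laplacian k z =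
     (if z = 0 then (1 + 2 * k) * rank1_log_deriv2 k 0
      else rank1_log_deriv2 k z + k * ((2 * z * rank1_log_deriv k z - (rank1_log k z - rank1_log k (-z))) / z\<^sup>2))"

context
  fixes k :: real
  assumes k: "0 \<le> k"
begin

lemma rank1_kernel_deriv2_eq:
  assumes z: "z \<noteq> 0"
  shows "rank1_kernel_deriv2 k z = rank1_kernel_deriv k z
    - 2 * k * ((rank1_even k z - 2 * k * rank1_odd k z / z) / z - rank1_odd k z / z\<^sup>2)"
proof -
  define h where "h w = rank1_kernel k w - 2 * k * rank1_odd k w / w" for w
  have "(h has_real_derivative rank1_kernel_deriv k z
      - 2 * k * ((rank1_even k z - 2 * k * rank1_odd k z / z) / z - rank1_odd k z / z\<^sup>2)) (at z)"
    unfolding h_def[abs_def] using z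
    by (auto intro!: derivative_eq_intros rank1_kernel_has_derivative rank1_odd_has_derivative k
        simp: field_simps power2_eq_square)
  then have "(rank1_kernel_deriv k has_real_derivative rank1_kernel_deriv k z
      - 2 * k * ((rank1_even k z - 2 * k * rank1_odd k z / z) / z - rank1_odd k z / z\<^sup>2)) (at z)"
  proof (rule has_field_derivative_transform_within_open[where S="-{0}"])
    show "h w = rank1_kernel_deriv k w" if "w \<in> - {0}" for w
      using that rank1_kernel_deriv_eq[OF k, of w] by (simp add: h_def)
  qed (use z in auto)
  then show ?thesis
    by (rule DERIV_unique[OF rank1_kernel_deriv_has_derivative[OF k]])
qed

lemma rank1_kernel_logconv_identity:
  "z \<noteq> 0 \<Longrightarrow> rank1_kernel k z * rank1_kernel_deriv2 k z - (rank1_kernel_deriv k z)\<^sup>2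
     = 2 * k / z\<^sup>2 * rank1_logconv_defect k z"
  unfolding rank1_kernel_deriv2_eq rank1_kernel_deriv_eq[OF k] rank1_kernel_even_odd[of k z]
    rank1_logconv_defect_def
  by (simp add: field_simps power2_eq_square)

lemma rank1_log_has_derivative: "(rank1_log k has_real_derivative rank1_log_deriv k z) (at z)"
  unfolding rank1_log_def[abs_def] rank1_log_deriv_def
  using rank1_kernel_pos[OF k, of z]
  by (auto intro!: derivative_eq_intros rank1_kernel_has_derivative k)

lemma rank1_log_deriv_has_derivative:
  "(rank1_log_deriv k has_real_derivative rank1_log_deriv2 k z) (at z)"
  unfolding rank1_log_deriv_def[abs_def] rank1_log_deriv2_def
  using rank1_kernel_pos[OF k, of z]
  by (auto intro!: derivative_eq_intros rank1_kernel_has_derivative rank1_kernel_deriv_has_derivative k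
      simp: power2_eq_square)

lemma rank1_log_minus_has_derivative:
  "((\<lambda>z. rank1_log k (-z)) has_real_derivative - rank1_log_deriv k (-z)) (at z)"
  using DERIV_chain2[OF rank1_log_has_derivative DERIV_minus[OF DERIV_ident]] by simp

lemma rank1_log_deriv_minus_has_derivative:
  "((\<lambda>z. rank1_log_deriv k (-z)) has_real_derivative - rank1_log_deriv2 k (-z)) (at z)"
  using DERIV_chain2[OF rank1_log_deriv_has_derivative DERIV_minus[OF DERIV_ident]] by simp

lemma isCont_rank1_log: "isCont (rank1_log k) z"
  using rank1_log_has_derivative by (rule DERIV_isCont)

lemma isCont_rank1_log_deriv: "isCont (rank1_log_deriv k) z"
  using rank1_log_deriv_has_derivative by (rule DERIV_isCont)

lemma isCont_rank1_log_deriv2: "isCont (rank1_log_deriv2 k) z"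
  unfolding rank1_log_deriv2_def[abs_def]
  using rank1_kernel_pos[OF k, of z] isCont_rank1_kernel[OF k] isCont_rank1_kernel_deriv[OF k]
    isCont_rank1_kernel_deriv2[OF k]
  by (auto intro!: continuous_intros)

lemma rank1_log_deriv2_nonneg: "0 \<le> rank1_log_deriv2 k z"
proof -
  have nonzero: "0 \<le> rank1_log_deriv2 k w" if "w \<noteq> 0" for w
  proof (cases "k = 0")
    case True
    then show ?thesis
      using rank1_kernel_logconv_identity[OF that] by (simp add: rank1_log_deriv2_def mult.commute)
  next
    case False
    then show ?thesis
      using k rank1_kernel_logconv_identity[OF that] rank1_logconv_defect_nonneg[of k w]
      by (simp add: rank1_log_deriv2_def mult.commute)
  qed
  show ?thesis
  proof (cases "z = 0")
    case True
    have "\<forall>\<^sub>F w in at 0. 0 \<le> rank1_log_deriv2 k w"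
      by (auto simp: eventually_at_filter intro!: always_eventually nonzero)
    with isCont_rank1_log_deriv2[of 0] True show ?thesis
      by (auto simp: isCont_def intro: tendsto_lowerbound)
  qed (rule nonzero)
qed

lemma rank1_log_deriv_mono: "a \<le> b \<Longrightarrow> rank1_log_deriv k a \<le> rank1_log_deriv k b"
  by (rule DERIV_nonneg_imp_nondecreasing)
    (auto intro!: exI rank1_log_deriv_has_derivative rank1_log_deriv2_nonneg)

lemma rank1_log_chord_le_tangent: "rank1_log k z - rank1_log k (-z) \<le> 2 * z * rank1_log_deriv k z"
proof (cases z "0::real" rule: linorder_cases)
  case greater
  then obtain c where c: "-z < c" "c < z"
    and mvt: "rank1_log k z - rank1_log k (-z) = (z - -z) * rank1_log_deriv k c"
    using MVT2[of "-z" z "rank1_log k" "rank1_log_deriv k"] rank1_log_has_derivative by auto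
  with rank1_log_deriv_mono[of c z] greater show ?thesis
    by (simp add: mult_left_mono)
next
  case less
  then obtain c where c: "z < c" "c < -z"
    and mvt: "rank1_log k (-z) - rank1_log k z = (-z - z) * rank1_log_deriv k c"
    using MVT2[of z "-z" "rank1_log k" "rank1_log_deriv k"] rank1_log_has_derivative by auto
  have "z * rank1_log_deriv k c \<le> z * rank1_log_deriv k z"
    using rank1_log_deriv_mono[of z c] c less by (intro mult_left_mono_neg) auto
  with mvt show ?thesis
    by (simp add: algebra_simps)
qed simp

lemma rank1_log_laplacian_nonneg: "0 \<le> rank1_log_laplacian k z"
  unfolding rank1_log_laplacian_def
  using rank1_log_deriv2_nonneg rank1_log_chord_le_tangent[of z] k
  by (auto intro!: add_nonneg_nonneg mult_nonneg_nonneg divide_nonneg_nonneg)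

lemma rank1_log_chord_defect_tendsto:
  "((\<lambda>z. (2 * z * rank1_log_deriv k z - (rank1_log k z - rank1_log k (-z))) / z\<^sup>2)
     \<longlongrightarrow> 2 * rank1_log_deriv2 k 0) (at 0)"
proof (rule lhopital)
  let ?f = "\<lambda>z. 2 * z * rank1_log_deriv k z - (rank1_log k z - rank1_log k (-z))"
  let ?f' = "\<lambda>z. 2 * rank1_log_deriv k z + 2 * z * rank1_log_deriv2 k z
    - (rank1_log_deriv k z + rank1_log_deriv k (-z))"
  have "isCont ?f 0"
    using isCont_rank1_log_deriv[of 0] isCont_rank1_log[of 0]
      DERIV_isCont[OF rank1_log_minus_has_derivative, of 0]
    by (auto intro!: continuous_intros simp: o_def)
  then show "(?f \<longlongrightarrow> 0) (at 0)"
    by (simp add: isCont_def)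
  show "((\<lambda>z. z\<^sup>2) \<longlongrightarrow> 0) (at (0::real))"
    by (auto intro!: tendsto_eq_intros)
  show "\<forall>\<^sub>F z in at 0. z\<^sup>2 \<noteq> (0::real)" "\<forall>\<^sub>F z in at 0. 2 * z \<noteq> (0::real)"
    by (auto simp: eventually_at_filter)
  show "\<forall>\<^sub>F z in at 0. (?f has_real_derivative ?f' z) (at z)"
    by (intro always_eventually allI)
      (auto intro!: derivative_eq_intros rank1_log_deriv_has_derivative rank1_log_has_derivative
        rank1_log_minus_has_derivative)
  show "\<forall>\<^sub>F z in at 0. ((\<lambda>z. z\<^sup>2) has_real_derivative 2 * z) (at z)"
    by (auto intro!: always_eventually derivative_eq_intros)
  have "((\<lambda>z. ((rank1_log_deriv k z - rank1_log_deriv k 0) / (z - 0)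
      - (rank1_log_deriv k (-z) - rank1_log_deriv k (-0)) / (z - 0)) / 2 + rank1_log_deriv2 k z)
      \<longlongrightarrow> (rank1_log_deriv2 k 0 - - rank1_log_deriv2 k (-0)) / 2 + rank1_log_deriv2 k 0) (at 0)"
    using rank1_log_deriv_has_derivative[of 0] rank1_log_deriv_minus_has_derivative[of 0]
      isCont_rank1_log_deriv2[of 0]
    by (intro tendsto_intros) (auto simp: has_field_derivative_iff isCont_def)
  moreover have "\<forall>\<^sub>F z in at 0. ((rank1_log_deriv k z - rank1_log_deriv k 0) / (z - 0)
      - (rank1_log_deriv k (-z) - rank1_log_deriv k (-0)) / (z - 0)) / 2 + rank1_log_deriv2 k z
      = ?f' z / (2 * z)"
    by (auto simp: eventually_at_filter field_simps intro!: always_eventually)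
  ultimately show "((\<lambda>z. ?f' z / (2 * z)) \<longlongrightarrow> 2 * rank1_log_deriv2 k 0) (at 0)"
    by (simp add: tendsto_cong)
qed

lemma isCont_rank1_log_laplacian: "isCont (rank1_log_laplacian k) z"
proof (cases "z = 0")
  case True
  have "((\<lambda>w. rank1_log_deriv2 k w + k * ((2 * w * rank1_log_deriv k w
      - (rank1_log k w - rank1_log k (-w))) / w\<^sup>2)) \<longlongrightarrow> rank1_log_deriv2 k 0 + k * (2 * rank1_log_deriv2 k 0)) (at 0)"
    using isCont_rank1_log_deriv2[of 0] rank1_log_chord_defect_tendsto
    unfolding isCont_def by (intro tendsto_add tendsto_mult_left)
  moreover have "\<forall>\<^sub>F w in at 0. rank1_log_deriv2 k w + k * ((2 * w * rank1_log_deriv k w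
      - (rank1_log k w - rank1_log k (-w))) / w\<^sup>2) = rank1_log_laplacian k w"
    by (auto simp: eventually_at_filter rank1_log_laplacian_def intro!: always_eventually)
  ultimately have "(rank1_log_laplacian k \<longlongrightarrow> rank1_log_deriv2 k 0 + k * (2 * rank1_log_deriv2 k 0)) (at 0)"
    by (rule Lim_transform_eventually)
  then show ?thesis
    using True by (simp add: isCont_def rank1_log_laplacian_def algebra_simps)
next
  case False
  have "isCont (\<lambda>w. rank1_log_deriv2 k w + k * ((2 * w * rank1_log_deriv k w
      - (rank1_log k w - rank1_log k (-w))) / w\<^sup>2)) z"
    using False isCont_rank1_log_deriv2[of z] isCont_rank1_log_deriv[of z] isCont_rank1_log[of z]
      DERIV_isCont[OF rank1_log_minus_has_derivative, of z]
    by (auto intro!: continuous_intros simp: o_def)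
  moreover have "\<forall>\<^sub>F w in nhds z. rank1_log_deriv2 k w + k * ((2 * w * rank1_log_deriv k w
      - (rank1_log k w - rank1_log k (-w))) / w\<^sup>2) = rank1_log_laplacian k w"
    using t1_space_nhds[OF False] by eventually_elim (simp add: rank1_log_laplacian_def)
  ultimately show ?thesis
    by (simp add: isCont_cong)
qed

end

section \<open>Pairwise orthogonal roots\<close>

lemma refl_eq_inner_self_2: "\<beta> \<bullet> \<beta> = 2 \<Longrightarrow> refl \<beta> x = x - (\<beta> \<bullet> x) *\<^sub>R \<beta>"
  unfolding refl_def by (simp add: power2_norm_eq_inner)

lemma inner_grad:
  assumes "(f has_derivative L) (at x)"
  shows "\<alpha> \<bullet> grad f x = L \<alpha>"
proof -
  have L: "linear L"
    using assms by (rule has_derivative_linear)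
  have "L \<alpha> = L (\<Sum>i\<in>Basis. (\<alpha> \<bullet> i) *\<^sub>R i)"
    by (simp add: euclidean_representation)
  also have "\<dots> = (\<Sum>i\<in>Basis. (\<alpha> \<bullet> i) * L i)"
    using L by (simp add: linear_sum linear_cmul)
  finally show ?thesis
    unfolding grad_def frechet_derivative_at[OF assms, symmetric]
    by (simp add: inner_sum_right mult.commute)
qed

locale orthogonal_dunkl =
  fixes Rp :: "'a::euclidean_space set" and \<kappa> :: "'a \<Rightarrow> real"
  assumes finite_roots: "finite Rp"
    and inner_root_self: "\<beta> \<in> Rp \<Longrightarrow> \<beta> \<bullet> \<beta> = 2"
    and orthogonal_roots: "\<beta> \<in> Rp \<Longrightarrow> \<gamma> \<in> Rp \<Longrightarrow> \<beta> \<noteq> \<gamma> \<Longrightarrow> \<beta> \<bullet> \<gamma> = 0"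
    and multiplicity_nonneg: "\<beta> \<in> Rp \<Longrightarrow> 0 \<le> \<kappa> \<beta>"
begin

lemma refl_eq: "\<beta> \<in> Rp \<Longrightarrow> refl \<beta> x = x - (\<beta> \<bullet> x) *\<^sub>R \<beta>"
  by (simp add: refl_eq_inner_self_2 inner_root_self)

lemma inner_refl_other: "\<beta> \<in> Rp \<Longrightarrow> \<gamma> \<in> Rp \<Longrightarrow> \<gamma> \<noteq> \<beta> \<Longrightarrow> \<gamma> \<bullet> refl \<beta> x = \<gamma> \<bullet> x"
  using orthogonal_roots[of \<gamma> \<beta>] by (simp add: refl_eq inner_diff_right)

lemma inner_refl_self: "\<beta> \<in> Rp \<Longrightarrow> \<beta> \<bullet> refl \<beta> x = - (\<beta> \<bullet> x)"
  using inner_root_self[of \<beta>] by (simp add: refl_eq inner_diff_right)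

lemma inner_refl_left: "\<beta> \<in> Rp \<Longrightarrow> refl \<beta> x \<bullet> y = x \<bullet> y - (\<beta> \<bullet> x) * (\<beta> \<bullet> y)"
  by (simp add: refl_eq inner_diff_left)

lemma inner_refl_refl: "\<beta> \<in> Rp \<Longrightarrow> refl \<beta> x \<bullet> refl \<beta> x = x \<bullet> x"
  using inner_root_self[of \<beta>]
  by (simp add: refl_eq inner_diff_left inner_diff_right inner_commute algebra_simps)

lemma refl_refl: "\<beta> \<in> Rp \<Longrightarrow> refl \<beta> (refl \<beta> x) = x"
  using inner_refl_self[of \<beta> x] by (simp add: refl_eq[of \<beta> "refl \<beta> x"]) (simp add: refl_eq)

lemma sum_roots_eq_single:
  assumes "\<alpha> \<in> Rp" "\<And>\<beta>. \<beta> \<in> Rp \<Longrightarrow> \<beta> \<noteq> \<alpha> \<Longrightarrow> g \<beta> = 0"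
  shows "(\<Sum>\<beta>\<in>Rp. g \<beta>) = g \<alpha>"
  using assms finite_roots by (subst sum.remove[of _ \<alpha>]) (auto intro!: sum.neutral)

lemma lambda_k_nonneg: "0 \<le> lambda_k Rp \<kappa>"
  unfolding lambda_k_def using multiplicity_nonneg by (simp add: sum_nonneg)

text \<open>Both the logarithm of the heat kernel and that of the Dunkl kernel have this form;
  as the roots are orthogonal, each ridge \<open>H \<beta> (\<beta> \<bullet> z)\<close> only sees the reflection \<open>refl \<beta>\<close>.\<close>

definition ridge_fun :: "real \<Rightarrow> real \<Rightarrow> 'a \<Rightarrow> ('a \<Rightarrow> real \<Rightarrow> real) \<Rightarrow> 'a \<Rightarrow> real" where
  "ridge_fun C a w H z = C - a * (z \<bullet> z) + z \<bullet> w + (\<Sum>\<beta>\<in>Rp. H \<beta> (\<beta> \<bullet> z))"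

lemma ridge_fun_has_derivative:
  assumes H': "\<forall>\<beta>\<in>Rp. \<forall>s. (H \<beta> has_real_derivative H' \<beta> s) (at s)"
  shows "(ridge_fun C a w H has_derivative
     (\<lambda>h. - a * (2 * (z \<bullet> h)) + h \<bullet> w + (\<Sum>\<beta>\<in>Rp. (\<beta> \<bullet> h) * H' \<beta> (\<beta> \<bullet> z)))) (at z)"
proof -
  have "((\<lambda>z. H \<beta> (\<beta> \<bullet> z)) has_derivative (\<lambda>h. (\<beta> \<bullet> h) * H' \<beta> (\<beta> \<bullet> z))) (at z)"
    if "\<beta> \<in> Rp" for \<beta>
    by (rule DERIV_compose_FDERIV[OF H'[rule_format, OF that]]) (auto intro!: derivative_eq_intros)
  then show ?thesis
    unfolding ridge_fun_def[abs_def]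
    by (auto intro!: derivative_eq_intros has_derivative_sum simp: inner_commute)
qed

lemma frechet_derivative_ridge_fun:
  assumes H': "\<forall>\<beta>\<in>Rp. \<forall>s. (H \<beta> has_real_derivative H' \<beta> s) (at s)"
  shows "frechet_derivative (ridge_fun C a w H) (at z)
    = (\<lambda>h. - a * (2 * (z \<bullet> h)) + h \<bullet> w + (\<Sum>\<beta>\<in>Rp. (\<beta> \<bullet> h) * H' \<beta> (\<beta> \<bullet> z)))"
  using ridge_fun_has_derivative[OF H'] by (rule frechet_derivative_at[symmetric])

lemma inner_grad_ridge_fun:
  assumes H': "\<forall>\<beta>\<in>Rp. \<forall>s. (H \<beta> has_real_derivative H' \<beta> s) (at s)"
    and \<alpha>: "\<alpha> \<in> Rp"
  shows "\<alpha> \<bullet> grad (ridge_fun C a w H) x = - 2 * a * (\<alpha> \<bullet> x) + \<alpha> \<bullet> w + 2 * H' \<alpha> (\<alpha> \<bullet> x)"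
  using inner_grad[OF ridge_fun_has_derivative[OF H', where C=C and a=a and w=w and z=x], where \<alpha>=\<alpha>] \<alpha>
    sum_roots_eq_single[of \<alpha> "\<lambda>\<beta>. (\<beta> \<bullet> \<alpha>) * H' \<beta> (\<beta> \<bullet> x)"] orthogonal_roots[of _ \<alpha>]
    inner_root_self[of \<alpha>]
  by (simp add: inner_commute)

lemma laplacian_ridge_fun:
  assumes H': "\<forall>\<beta>\<in>Rp. \<forall>s. (H \<beta> has_real_derivative H' \<beta> s) (at s)"
    and H'': "\<forall>\<beta>\<in>Rp. \<forall>s. (H' \<beta> has_real_derivative H'' \<beta> s) (at s)"
  shows "laplacian (ridge_fun C a w H) x = - 2 * a * real DIM('a) + (\<Sum>\<beta>\<in>Rp. 2 * H'' \<beta> (\<beta> \<bullet> x))"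
proof -
  have "((\<lambda>z. H' \<beta> (\<beta> \<bullet> z)) has_derivative (\<lambda>h. (\<beta> \<bullet> h) * H'' \<beta> (\<beta> \<bullet> x))) (at x)"
    if "\<beta> \<in> Rp" for \<beta>
    by (rule DERIV_compose_FDERIV[OF H''[rule_format, OF that]]) (auto intro!: derivative_eq_intros)
  then have second: "((\<lambda>z. frechet_derivative (ridge_fun C a w H) (at z) i) has_derivative
      (\<lambda>h. - a * (2 * (h \<bullet> i)) + (\<Sum>\<beta>\<in>Rp. (\<beta> \<bullet> i) * ((\<beta> \<bullet> h) * H'' \<beta> (\<beta> \<bullet> x))))) (at x)" for i
    unfolding frechet_derivative_ridge_fun[OF H']
    by (auto intro!: derivative_eq_intros has_derivative_sum has_derivative_mult_right)
  have "laplacian (ridge_fun C a w H) x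
      = (\<Sum>i\<in>Basis. - a * (2 * (i \<bullet> i)) + (\<Sum>\<beta>\<in>Rp. H'' \<beta> (\<beta> \<bullet> x) * ((\<beta> \<bullet> i) * (\<beta> \<bullet> i))))"
    unfolding laplacian_def frechet_derivative_at[OF second, symmetric]
    by (simp add: algebra_simps)
  also have "\<dots> = - 2 * a * real DIM('a)
      + (\<Sum>\<beta>\<in>Rp. H'' \<beta> (\<beta> \<bullet> x) * (\<Sum>i\<in>Basis. (\<beta> \<bullet> i) * (\<beta> \<bullet> i)))"
    by (simp add: sum.distrib sum_subtractf sum_distrib_left sum.swap[of _ Basis Rp])
  also have "\<dots> = - 2 * a * real DIM('a) + (\<Sum>\<beta>\<in>Rp. 2 * H'' \<beta> (\<beta> \<bullet> x))"
    by (simp add: euclidean_inner[symmetric] inner_root_self mult.commute cong: sum.cong)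
  finally show ?thesis .
qed

lemma ridge_fun_refl_diff:
  "\<alpha> \<in> Rp \<Longrightarrow> ridge_fun C a w H x - ridge_fun C a w H (refl \<alpha> x)
     = (\<alpha> \<bullet> x) * (\<alpha> \<bullet> w) + H \<alpha> (\<alpha> \<bullet> x) - H \<alpha> (- (\<alpha> \<bullet> x))"
  using sum_roots_eq_single[of \<alpha> "\<lambda>\<beta>. H \<beta> (\<beta> \<bullet> x) - H \<beta> (\<beta> \<bullet> refl \<alpha> x)"]
    inner_refl_other[of \<alpha>] inner_refl_refl[of \<alpha> x] inner_refl_left[of \<alpha> x w] inner_refl_self[of \<alpha> x]
  by (simp add: ridge_fun_def sum_subtractf algebra_simps)

lemma dunkl_laplacian_raw_ridge_fun:
  assumes H': "\<forall>\<beta>\<in>Rp. \<forall>s. (H \<beta> has_real_derivative H' \<beta> s) (at s)"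
    and H'': "\<forall>\<beta>\<in>Rp. \<forall>s. (H' \<beta> has_real_derivative H'' \<beta> s) (at s)"
    and x: "x \<in> regular_set Rp"
  shows "dunkl_laplacian_raw Rp \<kappa> (ridge_fun C a w H) x =
    - 2 * a * (real DIM('a) + 2 * lambda_k Rp \<kappa>) +
    (\<Sum>\<alpha>\<in>Rp. 2 * H'' \<alpha> (\<alpha> \<bullet> x) + 2 * \<kappa> \<alpha> * (2 * H' \<alpha> (\<alpha> \<bullet> x) / (\<alpha> \<bullet> x)
        - (H \<alpha> (\<alpha> \<bullet> x) - H \<alpha> (- (\<alpha> \<bullet> x))) / (\<alpha> \<bullet> x)\<^sup>2))"
proof -
  let ?f = "ridge_fun C a w H"
  define Z where "Z \<alpha> = 2 * H' \<alpha> (\<alpha> \<bullet> x) / (\<alpha> \<bullet> x) - (H \<alpha> (\<alpha> \<bullet> x) - H \<alpha> (- (\<alpha> \<bullet> x))) / (\<alpha> \<bullet> x)\<^sup>2"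
    for \<alpha>
  have root_term: "\<kappa> \<alpha> * ((\<alpha> \<bullet> grad ?f x) / (\<alpha> \<bullet> x) - (?f x - ?f (refl \<alpha> x)) / (\<alpha> \<bullet> x)\<^sup>2)
      = - 2 * a * \<kappa> \<alpha> + \<kappa> \<alpha> * Z \<alpha>" if \<alpha>: "\<alpha> \<in> Rp" for \<alpha>
  proof -
    define s where "s = \<alpha> \<bullet> x"
    have "s \<noteq> 0"
      using x \<alpha> by (auto simp: regular_set_def s_def)
    then have eq: "(- 2 * a * s + \<alpha> \<bullet> w + 2 * H' \<alpha> s) / s - (s * (\<alpha> \<bullet> w) + H \<alpha> s - H \<alpha> (- s)) / s\<^sup>2
        = - 2 * a + (2 * H' \<alpha> s / s - (H \<alpha> s - H \<alpha> (- s)) / s\<^sup>2)"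
      by (simp add: power2_eq_square diff_divide_distrib add_divide_distrib)
    have g: "\<alpha> \<bullet> grad ?f x = - 2 * a * s + \<alpha> \<bullet> w + 2 * H' \<alpha> s"
      using inner_grad_ridge_fun[OF H' \<alpha>] by (simp add: s_def)
    have d: "?f x - ?f (refl \<alpha> x) = s * (\<alpha> \<bullet> w) + H \<alpha> s - H \<alpha> (- s)"
      using ridge_fun_refl_diff[OF \<alpha>] by (simp add: s_def)
    show ?thesis
      unfolding Z_def s_def[symmetric] g d eq by (simp add: algebra_simps)
  qed
  have lap: "laplacian ?f x = - 2 * a * real DIM('a) + (\<Sum>\<beta>\<in>Rp. 2 * H'' \<beta> (\<beta> \<bullet> x))"
    by (rule laplacian_ridge_fun[OF H' H''])
  have "dunkl_laplacian_raw Rp \<kappa> ?f x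
      = laplacian ?f x + 2 * (\<Sum>\<alpha>\<in>Rp. - 2 * a * \<kappa> \<alpha> + \<kappa> \<alpha> * Z \<alpha>)"
    unfolding dunkl_laplacian_raw_def by (simp add: root_term cong: sum.cong)
  also have "\<dots> = - 2 * a * (real DIM('a) + 2 * lambda_k Rp \<kappa>)
      + (\<Sum>\<alpha>\<in>Rp. 2 * H'' \<alpha> (\<alpha> \<bullet> x) + 2 * \<kappa> \<alpha> * Z \<alpha>)"
    unfolding lap lambda_k_def
    by (simp add: sum.distrib sum_subtractf sum_negf sum_distrib_left sum_distrib_right algebra_simps)
  finally show ?thesis
    unfolding Z_def .
qed

subsection \<open>Density of the regular set\<close>

definition regular_direction :: 'a where
  "regular_direction = (\<Sum>\<beta>\<in>Rp. \<beta>)"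

lemma inner_regular_direction: "\<beta> \<in> Rp \<Longrightarrow> \<beta> \<bullet> regular_direction = 2"
  using sum_roots_eq_single[of \<beta> "\<lambda>\<gamma>. \<beta> \<bullet> \<gamma>"] orthogonal_roots[of \<beta>] inner_root_self[of \<beta>]
  by (simp add: regular_direction_def inner_sum_right)

lemma eventually_regular:
  "\<forall>\<^sub>F e in at_right 0. x + e *\<^sub>R regular_direction \<in> regular_set Rp \<and> 0 < e"
proof -
  have "\<forall>\<^sub>F e in at_right 0. \<beta> \<bullet> x + 2 * e \<noteq> 0" if "\<beta> \<in> Rp" for \<beta>
  proof (cases "\<beta> \<bullet> x = 0")
    case True
    show ?thesis
      using eventually_at_right_less[of "0::real"] by (rule eventually_mono) (simp add: True)
  next
    case False
    have "((\<lambda>e. \<beta> \<bullet> x + 2 * e) \<longlongrightarrow> \<beta> \<bullet> x + 2 * 0) (at_right 0)"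
      by (intro tendsto_intros)
    with False show ?thesis
      by (intro tendsto_imp_eventually_ne) auto
  qed
  then have "\<forall>\<^sub>F e in at_right 0. \<forall>\<beta>\<in>Rp. \<beta> \<bullet> x + 2 * e \<noteq> 0"
    using finite_roots by (simp add: eventually_ball_finite)
  with eventually_at_right_less[of "0::real"] show ?thesis
    by eventually_elim (simp add: regular_set_def inner_add_right inner_regular_direction mult.commute)
qed

lemma tendsto_regular_direction: "((\<lambda>e. x + e *\<^sub>R regular_direction) \<longlongrightarrow> x) (at_right 0)"
proof -
  have "((\<lambda>e. x + e *\<^sub>R regular_direction) \<longlongrightarrow> x + 0 *\<^sub>R regular_direction) (at_right 0)"
    by (intro tendsto_intros)
  then show ?thesis
    by simp
qed

lemma continuous_eq_0_if_eq_0_on_regular: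
  assumes "continuous_on UNIV g" and "\<And>x. x \<in> regular_set Rp \<Longrightarrow> g x = (0::real)"
  shows "g x = 0"
proof -
  have "((\<lambda>e. g (x + e *\<^sub>R regular_direction)) \<longlongrightarrow> g x) (at_right 0)"
    by (rule continuous_on_tendsto_compose[OF assms(1) tendsto_regular_direction]) auto
  moreover have "\<forall>\<^sub>F e in at_right 0. g (x + e *\<^sub>R regular_direction) = 0"
    using eventually_regular[of x] by eventually_elim (simp add: assms(2))
  ultimately have "((\<lambda>e. 0) \<longlongrightarrow> g x) (at_right (0::real))"
    by (rule Lim_transform_eventually)
  from tendsto_unique[OF _ this tendsto_const] show ?thesis
    by simp
qed

lemma at_within_regular_set_neq_bot: "at x within regular_set Rp \<noteq> bot"
proof (cases "Rp = {}")
  case True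
  then show ?thesis
    by (simp add: regular_set_def)
next
  case False
  then obtain \<beta> where "\<beta> \<in> Rp"
    by blast
  then have nonzero: "regular_direction \<noteq> 0"
    using inner_regular_direction by fastforce
  have "\<forall>\<^sub>F e in at_right 0. x + e *\<^sub>R regular_direction \<in> regular_set Rp
      \<and> x + e *\<^sub>R regular_direction \<noteq> x"
    using eventually_regular[of x] by eventually_elim (use nonzero in simp)
  with tendsto_regular_direction
  have lim: "filterlim (\<lambda>e. x + e *\<^sub>R regular_direction) (at x within regular_set Rp) (at_right 0)"
    by (simp add: filterlim_at)
  show ?thesis
  proof
    assume "at x within regular_set Rp = bot"
    with lim have "at_right (0::real) = bot"
      by (simp add: filterlim_def filtermap_bot_iff bot_unique)
    then show False
      by simp
  qed
qed

lemma dunkl_laplacian_eqI: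
  assumes "\<And>z. z \<in> regular_set Rp \<Longrightarrow> dunkl_laplacian_raw Rp \<kappa> f z = \<Psi> z"
    and "\<And>z. isCont \<Psi> z"
  shows "dunkl_laplacian Rp \<kappa> f x = \<Psi> x"
proof (cases "x \<in> regular_set Rp")
  case False
  have "(\<Psi> \<longlongrightarrow> \<Psi> x) (at x within regular_set Rp)"
    using assms(2)[of x] unfolding isCont_def by (rule tendsto_within_subset) simp
  moreover have "\<forall>\<^sub>F z in at x within regular_set Rp. \<Psi> z = dunkl_laplacian_raw Rp \<kappa> f z"
    by (simp add: eventually_at_filter assms(1))
  ultimately have "(dunkl_laplacian_raw Rp \<kappa> f \<longlongrightarrow> \<Psi> x) (at x within regular_set Rp)"
    by (rule Lim_transform_eventually)
  with False show ?thesis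
    unfolding dunkl_laplacian_def by (simp add: tendsto_Lim[OF at_within_regular_set_neq_bot])
qed (simp add: dunkl_laplacian_def assms(1))

end

section \<open>The Dunkl kernel of pairwise orthogonal roots\<close>

lemma rank1_log_deriv_eq:
  assumes "0 \<le> k" and "u \<noteq> 0"
  shows "rank1_log_deriv k u = 1 - k * (1 - rank1_kernel k (-u) / rank1_kernel k u) / u"
  using rank1_kernel_ode[OF assms(1), of u] rank1_kernel_pos[OF assms(1), of u] assms(2)
  by (simp add: rank1_log_deriv_def field_simps)

text \<open>For orthogonal roots with \<open>\<beta> \<bullet> \<beta> = 2\<close> one has
  \<open>x \<bullet> y = x\<^sub>\<bottom> \<bullet> y\<^sub>\<bottom> + (\<Sum>\<beta>\<in>Rp. (\<beta> \<bullet> x) (\<beta> \<bullet> y) / 2)\<close>, and the Dunkl kernel factorises as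
  \<open>exp (x\<^sub>\<bottom> \<bullet> y\<^sub>\<bottom>) * (\<Prod>\<beta>\<in>Rp. rank1_kernel (\<kappa> \<beta>) ((\<beta> \<bullet> x) (\<beta> \<bullet> y) / 2))\<close>;
  \<open>kernel_ridge\<close> is the logarithm of one factor minus its share of \<open>x \<bullet> y\<close>.\<close>

definition kernel_ridge :: "('a::euclidean_space \<Rightarrow> real) \<Rightarrow> 'a \<Rightarrow> 'a \<Rightarrow> real \<Rightarrow> real" where
  "kernel_ridge \<kappa> y \<beta> s = rank1_log (\<kappa> \<beta>) ((\<beta> \<bullet> y) / 2 * s) - (\<beta> \<bullet> y) / 2 * s"

definition kernel_ridge_deriv :: "('a::euclidean_space \<Rightarrow> real) \<Rightarrow> 'a \<Rightarrow> 'a \<Rightarrow> real \<Rightarrow> real" where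
  "kernel_ridge_deriv \<kappa> y \<beta> s = (\<beta> \<bullet> y) / 2 * rank1_log_deriv (\<kappa> \<beta>) ((\<beta> \<bullet> y) / 2 * s) - (\<beta> \<bullet> y) / 2"

definition kernel_ridge_deriv2 :: "('a::euclidean_space \<Rightarrow> real) \<Rightarrow> 'a \<Rightarrow> 'a \<Rightarrow> real \<Rightarrow> real" where
  "kernel_ridge_deriv2 \<kappa> y \<beta> s = ((\<beta> \<bullet> y) / 2)\<^sup>2 * rank1_log_deriv2 (\<kappa> \<beta>) ((\<beta> \<bullet> y) / 2 * s)"

context orthogonal_dunkl
begin

definition orthogonal_dunkl_kernel :: "'a \<Rightarrow> 'a \<Rightarrow> real" where
  "orthogonal_dunkl_kernel x y = exp (ridge_fun 0 0 y (kernel_ridge \<kappa> y) x)"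

lemma kernel_ridge_has_derivative:
  "\<forall>\<beta>\<in>Rp. \<forall>s. (kernel_ridge \<kappa> y \<beta> has_real_derivative kernel_ridge_deriv \<kappa> y \<beta> s) (at s)"
  unfolding kernel_ridge_def[abs_def] kernel_ridge_deriv_def
  by (auto intro!: derivative_eq_intros DERIV_chain2[OF rank1_log_has_derivative] multiplicity_nonneg
      simp: algebra_simps)

lemma kernel_ridge_deriv_has_derivative:
  "\<forall>\<beta>\<in>Rp. \<forall>s. (kernel_ridge_deriv \<kappa> y \<beta> has_real_derivative kernel_ridge_deriv2 \<kappa> y \<beta> s) (at s)"
  unfolding kernel_ridge_deriv_def[abs_def] kernel_ridge_deriv2_def
  by (auto intro!: derivative_eq_intros DERIV_chain2[OF rank1_log_deriv_has_derivative] multiplicity_nonneg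
      simp: power2_eq_square algebra_simps)

lemma orthogonal_dunkl_kernel_has_derivative:
  "((\<lambda>x. orthogonal_dunkl_kernel x y) has_derivative (\<lambda>h. orthogonal_dunkl_kernel x y
     * (h \<bullet> y + (\<Sum>\<beta>\<in>Rp. (\<beta> \<bullet> h) * kernel_ridge_deriv \<kappa> y \<beta> (\<beta> \<bullet> x))))) (at x)"
  unfolding orthogonal_dunkl_kernel_def
  using DERIV_compose_FDERIV[OF DERIV_exp ridge_fun_has_derivative[OF kernel_ridge_has_derivative,
        where C=0 and a=0 and w=y and z=x]]
  by (simp add: mult.commute)

lemma frechet_derivative_orthogonal_dunkl_kernel:
  "frechet_derivative (\<lambda>x. orthogonal_dunkl_kernel x y) (at x) = (\<lambda>h. orthogonal_dunkl_kernel x y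
     * (h \<bullet> y + (\<Sum>\<beta>\<in>Rp. (\<beta> \<bullet> h) * kernel_ridge_deriv \<kappa> y \<beta> (\<beta> \<bullet> x))))"
  using orthogonal_dunkl_kernel_has_derivative by (rule frechet_derivative_at[symmetric])

lemma C1_orthogonal_dunkl_kernel: "C1_fun (\<lambda>x. orthogonal_dunkl_kernel x y)"
  unfolding C1_fun_def
proof safe
  show "(\<lambda>x. orthogonal_dunkl_kernel x y) differentiable at x" for x
    using orthogonal_dunkl_kernel_has_derivative by (auto simp: differentiable_def)
  have "continuous_on UNIV (\<lambda>x. orthogonal_dunkl_kernel x y)"
    by (rule continuous_at_imp_continuous_on)
      (auto intro!: has_derivative_continuous[OF orthogonal_dunkl_kernel_has_derivative])
  moreover have "continuous_on UNIV (\<lambda>x. kernel_ridge_deriv \<kappa> y \<beta> (\<beta> \<bullet> x))" if "\<beta> \<in> Rp" for \<beta>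
  proof (intro continuous_at_imp_continuous_on ballI)
    have "isCont (kernel_ridge_deriv \<kappa> y \<beta>) s" for s
      using kernel_ridge_deriv_has_derivative that by (blast intro: DERIV_isCont)
    then show "isCont (\<lambda>x. kernel_ridge_deriv \<kappa> y \<beta> (\<beta> \<bullet> x)) x" for x
      by (rule isCont_o2[rotated]) (intro continuous_intros)
  qed
  ultimately show "continuous_on UNIV (\<lambda>x. frechet_derivative (\<lambda>x. orthogonal_dunkl_kernel x y) (at x) v)"
    for v
    unfolding frechet_derivative_orthogonal_dunkl_kernel by (auto intro!: continuous_intros)
qed

lemma orthogonal_dunkl_kernel_0: "orthogonal_dunkl_kernel 0 y = 1"
  by (simp add: orthogonal_dunkl_kernel_def ridge_fun_def kernel_ridge_def)

lemma orthogonal_dunkl_kernel_pos: "0 < orthogonal_dunkl_kernel x y"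
  by (simp add: orthogonal_dunkl_kernel_def)

lemma orthogonal_dunkl_kernel_refl:
  assumes \<alpha>: "\<alpha> \<in> Rp"
  shows "orthogonal_dunkl_kernel (refl \<alpha> x) y = orthogonal_dunkl_kernel x y
    * (rank1_kernel (\<kappa> \<alpha>) (- ((\<alpha> \<bullet> y) / 2 * (\<alpha> \<bullet> x))) / rank1_kernel (\<kappa> \<alpha>) ((\<alpha> \<bullet> y) / 2 * (\<alpha> \<bullet> x)))"
proof -
  let ?u = "(\<alpha> \<bullet> y) / 2 * (\<alpha> \<bullet> x)"
  have "ridge_fun 0 0 y (kernel_ridge \<kappa> y) (refl \<alpha> x)
      = ridge_fun 0 0 y (kernel_ridge \<kappa> y) x + (rank1_log (\<kappa> \<alpha>) (- ?u) - rank1_log (\<kappa> \<alpha>) ?u)"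
    using ridge_fun_refl_diff[OF \<alpha>, of 0 0 y "kernel_ridge \<kappa> y" x]
    by (simp add: kernel_ridge_def algebra_simps)
  then show ?thesis
    using rank1_kernel_pos[OF multiplicity_nonneg[OF \<alpha>]]
    by (simp add: orthogonal_dunkl_kernel_def exp_add exp_diff rank1_log_def)
qed

lemma orthogonal_dunkl_kernel_eigenfunction:
  assumes x: "x \<in> regular_set Rp"
  shows "dunkl_op Rp \<kappa> \<xi> (\<lambda>z. orthogonal_dunkl_kernel z y) x = (\<xi> \<bullet> y) * orthogonal_dunkl_kernel x y"
proof -
  let ?E = "orthogonal_dunkl_kernel x y"
  have root_term: "?E * ((\<alpha> \<bullet> \<xi>) * kernel_ridge_deriv \<kappa> y \<alpha> (\<alpha> \<bullet> x))
      + \<kappa> \<alpha> * (\<alpha> \<bullet> \<xi>) * (?E - orthogonal_dunkl_kernel (refl \<alpha> x) y) / (\<alpha> \<bullet> x) = 0"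
    if \<alpha>: "\<alpha> \<in> Rp" for \<alpha>
  proof -
    let ?c = "(\<alpha> \<bullet> y) / 2" and ?k = "\<kappa> \<alpha>" and ?s = "\<alpha> \<bullet> x"
    define r where "r = rank1_kernel ?k (- (?c * ?s)) / rank1_kernel ?k (?c * ?s)"
    have k: "0 \<le> ?k" and s: "?s \<noteq> 0"
      using \<alpha> x multiplicity_nonneg by (auto simp: regular_set_def)
    have "?E * ((\<alpha> \<bullet> \<xi>) * kernel_ridge_deriv \<kappa> y \<alpha> (\<alpha> \<bullet> x))
        + \<kappa> \<alpha> * (\<alpha> \<bullet> \<xi>) * (?E - orthogonal_dunkl_kernel (refl \<alpha> x) y) / (\<alpha> \<bullet> x)
        = ?E * (\<alpha> \<bullet> \<xi>) * (?c * rank1_log_deriv ?k (?c * ?s) - ?c + ?k * (1 - r) / ?s)"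
      unfolding orthogonal_dunkl_kernel_refl[OF \<alpha>] kernel_ridge_deriv_def r_def[symmetric]
      using orthogonal_dunkl_kernel_pos[of x y] s by (simp add: field_simps)
    also have "?c * rank1_log_deriv ?k (?c * ?s) - ?c + ?k * (1 - r) / ?s = 0"
    proof (cases "?c = 0")
      case False
      then show ?thesis
        using rank1_log_deriv_eq[OF k, of "?c * ?s"] s by (simp add: r_def field_simps)
    qed (simp add: r_def)
    finally show ?thesis
      by simp
  qed
  have "dunkl_op Rp \<kappa> \<xi> (\<lambda>z. orthogonal_dunkl_kernel z y) x
      = ?E * (\<xi> \<bullet> y) + (\<Sum>\<alpha>\<in>Rp. ?E * ((\<alpha> \<bullet> \<xi>) * kernel_ridge_deriv \<kappa> y \<alpha> (\<alpha> \<bullet> x))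
          + \<kappa> \<alpha> * (\<alpha> \<bullet> \<xi>) * (?E - orthogonal_dunkl_kernel (refl \<alpha> x) y) / (\<alpha> \<bullet> x))"
    unfolding dunkl_op_def frechet_derivative_orthogonal_dunkl_kernel
    by (simp add: sum.distrib sum_distrib_left algebra_simps)
  also have "\<dots> = (\<xi> \<bullet> y) * ?E"
    by (simp add: root_term)
  finally show ?thesis .
qed

end

section \<open>Uniqueness of the Dunkl kernel\<close>

lemma sum_mult_diff_involution_nonneg:
  fixes f :: "'b \<Rightarrow> real"
  assumes "finite W" and "\<And>w. w \<in> W \<Longrightarrow> \<sigma> w \<in> W" and "\<And>w. w \<in> W \<Longrightarrow> \<sigma> (\<sigma> w) = w"
  shows "0 \<le> (\<Sum>w\<in>W. f w * (f w - f (\<sigma> w)))"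
proof -
  have "bij_betw \<sigma> W W"
    by (rule bij_betw_byWitness[where f'=\<sigma>]) (use assms in auto)
  then have reindex: "(\<Sum>w\<in>W. (f (\<sigma> w))\<^sup>2) = (\<Sum>w\<in>W. (f w)\<^sup>2)"
    by (rule sum.reindex_bij_betw)
  have "(\<Sum>w\<in>W. f w * f (\<sigma> w)) \<le> (\<Sum>w\<in>W. ((f w)\<^sup>2 + (f (\<sigma> w))\<^sup>2) / 2)"
  proof (rule sum_mono)
    show "f w * f (\<sigma> w) \<le> ((f w)\<^sup>2 + (f (\<sigma> w))\<^sup>2) / 2" for w
      using sum_squares_bound[of "f w" "f (\<sigma> w)"] by (simp add: power2_eq_square)
  qed
  also have "\<dots> = (\<Sum>w\<in>W. (f w)\<^sup>2)"
    by (simp add: sum_divide_distrib[symmetric] sum.distrib reindex)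
  finally show ?thesis
    by (simp add: right_diff_distrib sum_subtractf power2_eq_square)
qed

lemma has_real_derivative_along_ray:
  assumes "g differentiable (at (t *\<^sub>R v))"
  shows "((\<lambda>s. g (s *\<^sub>R v)) has_real_derivative frechet_derivative g (at (t *\<^sub>R v)) v) (at t)"
proof -
  let ?D = "frechet_derivative g (at (t *\<^sub>R v))"
  have D: "(g has_derivative ?D) (at (t *\<^sub>R v))"
    using assms frechet_derivative_works by blast
  have "((\<lambda>s. s *\<^sub>R v) has_derivative (\<lambda>h. h *\<^sub>R v)) (at t)"
    by (auto intro!: derivative_eq_intros)
  from diff_chain_at[OF this D]
  have "((\<lambda>s. g (s *\<^sub>R v)) has_derivative (\<lambda>h. ?D (h *\<^sub>R v))) (at t)"
    by (simp add: o_def)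
  moreover have "?D (h *\<^sub>R v) = ?D v * h" for h
    using linear_scale[OF has_derivative_linear[OF D]] by simp
  ultimately show ?thesis
    unfolding has_field_derivative_def by simp
qed

lemma nonpos_if_deriv_le_linear:
  fixes S S' :: "real \<Rightarrow> real"
  assumes deriv: "\<And>t. (S has_real_derivative S' t) (at t)"
    and bound: "\<And>t. 0 < t \<Longrightarrow> t < 1 \<Longrightarrow> S' t \<le> c * S t"
    and "S 0 = 0"
  shows "S 1 \<le> 0"
proof -
  define h where "h t = - (exp (- c * t) * S t)" for t
  have h_deriv: "(h has_real_derivative exp (- c * t) * (c * S t - S' t)) (at t)" for t
    unfolding h_def by (auto intro!: derivative_eq_intros deriv simp: algebra_simps)
  have "h 0 \<le> h 1"
  proof (rule DERIV_nonneg_imp_increasing_open[of 0 1 h])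
    show "continuous_on {0..1} h"
      using h_deriv by (intro continuous_at_imp_continuous_on ballI) (blast intro: DERIV_isCont)
    fix t :: real assume t: "0 < t" "t < 1"
    have "0 \<le> exp (- c * t) * (c * S t - S' t)"
      using bound[OF t] by simp
    with h_deriv show "\<exists>y. (h has_real_derivative y) (at t) \<and> 0 \<le> y"
      by blast
  qed simp
  with \<open>S 0 = 0\<close> show ?thesis
    by (simp add: h_def mult_le_0_iff)
qed

lemma inner_refl_commute: "refl \<gamma> u \<bullet> v = u \<bullet> refl \<gamma> v"
  unfolding refl_def by (simp add: inner_diff_left inner_diff_right inner_commute)

lemma refl_scaleR: "refl \<gamma> (t *\<^sub>R v) = t *\<^sub>R refl \<gamma> v"
  unfolding refl_def by (simp add: scaleR_diff_right)

lemma refl_in_refl_group_set: "\<alpha> \<in> R \<Longrightarrow> refl \<alpha> \<in> refl_group_set R"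
  using refl_group_set.step[OF _ refl_group_set.id_in, of \<alpha> R] by simp

lemma refl_group_set_comp:
  assumes "a \<in> refl_group_set R" and "b \<in> refl_group_set R"
  shows "a \<circ> b \<in> refl_group_set R"
  using assms(1)
proof induction
  case (step \<alpha> g)
  then show ?case
    by (metis o_assoc refl_group_set.step)
qed (simp add: assms(2))

lemma refl_group_set_inner_root:
  assumes "g \<in> refl_group_set R" and "\<forall>\<alpha>\<in>R. refl \<alpha> ` R = R" and "\<alpha> \<in> R"
  shows "\<exists>\<beta>\<in>R. \<forall>x. \<alpha> \<bullet> g x = \<beta> \<bullet> x"
  using assms(1,3)
proof (induction arbitrary: \<alpha>)
  case (step \<gamma> g)
  then have "refl \<gamma> \<alpha> \<in> R"
    using assms(2) by blast
  with step.IH obtain \<beta> where "\<beta> \<in> R" "\<forall>x. refl \<gamma> \<alpha> \<bullet> g x = \<beta> \<bullet> x"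
    by blast
  then show ?case
    by (auto simp: inner_refl_commute[symmetric])
qed auto

lemma dunkl_op_along_ray:
  assumes "p \<in> regular_set Rp" and "t \<noteq> 0"
  shows "dunkl_op Rp \<kappa> p g (t *\<^sub>R p) = frechet_derivative g (at (t *\<^sub>R p)) p
    + (\<Sum>\<alpha>\<in>Rp. \<kappa> \<alpha> * (g (t *\<^sub>R p) - g (t *\<^sub>R refl \<alpha> p))) / t"
proof -
  have "\<kappa> \<alpha> * (\<alpha> \<bullet> p) * (g (t *\<^sub>R p) - g (refl \<alpha> (t *\<^sub>R p))) / (\<alpha> \<bullet> (t *\<^sub>R p))
      = \<kappa> \<alpha> * (g (t *\<^sub>R p) - g (t *\<^sub>R refl \<alpha> p)) / t" if "\<alpha> \<in> Rp" for \<alpha>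
    using assms that by (auto simp: regular_set_def refl_scaleR)
  then show ?thesis
    unfolding dunkl_op_def by (simp add: sum_divide_distrib)
qed

lemma frechet_derivative_diff:
  assumes "f differentiable (at x)" and "g differentiable (at x)"
  shows "frechet_derivative (\<lambda>z. f z - g z) (at x)
    = (\<lambda>h. frechet_derivative f (at x) h - frechet_derivative g (at x) h)"
  using has_derivative_diff[OF assms[unfolded frechet_derivative_works]]
  by (rule frechet_derivative_at[symmetric])

lemma C1_fun_diff: "C1_fun f \<Longrightarrow> C1_fun g \<Longrightarrow> C1_fun (\<lambda>z. f z - g z)"
  unfolding C1_fun_def by (auto simp: frechet_derivative_diff intro!: continuous_intros)

lemma dunkl_op_diff:
  assumes "f differentiable (at x)" and "g differentiable (at x)"
  shows "dunkl_op Rp \<kappa> \<xi> (\<lambda>z. f z - g z) x = dunkl_op Rp \<kappa> \<xi> f x - dunkl_op Rp \<kappa> \<xi> g x"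
proof -
  have "(\<Sum>\<alpha>\<in>Rp. \<kappa> \<alpha> * (\<alpha> \<bullet> \<xi>) * (f x - g x - (f (refl \<alpha> x) - g (refl \<alpha> x))) / (\<alpha> \<bullet> x))
      = (\<Sum>\<alpha>\<in>Rp. \<kappa> \<alpha> * (\<alpha> \<bullet> \<xi>) * (f x - f (refl \<alpha> x)) / (\<alpha> \<bullet> x))
        - (\<Sum>\<alpha>\<in>Rp. \<kappa> \<alpha> * (\<alpha> \<bullet> \<xi>) * (g x - g (refl \<alpha> x)) / (\<alpha> \<bullet> x))"
    unfolding sum_subtractf[symmetric] by (rule sum.cong) (auto simp: divide_simps algebra_simps)
  then show ?thesis
    unfolding dunkl_op_def frechet_derivative_diff[OF assms] by simp
qed

locale orthogonal_dunkl_group = orthogonal_dunkl Rp \<kappa> for Rp :: "'a::euclidean_space set" and \<kappa> +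
  fixes R :: "'a set"
  assumes positive_roots_subset: "Rp \<subseteq> R" and roots_subset: "R \<subseteq> Rp \<union> uminus ` Rp"
    and refl_roots: "\<forall>\<alpha>\<in>R. refl \<alpha> ` R = R" and finite_refl_group: "finite (refl_group_set R)"
begin

lemma refl_group_preserves_regular:
  assumes "w \<in> refl_group_set R" and "x \<in> regular_set Rp"
  shows "w x \<in> regular_set Rp"
  unfolding regular_set_def
proof safe
  fix \<alpha> assume "\<alpha> \<in> Rp" and zero: "\<alpha> \<bullet> w x = 0"
  then obtain \<beta> where "\<beta> \<in> R" and \<beta>: "\<forall>x. \<alpha> \<bullet> w x = \<beta> \<bullet> x"
    using refl_group_set_inner_root[OF assms(1) refl_roots] positive_roots_subset by blast
  then have "\<beta> \<in> Rp \<or> - \<beta> \<in> Rp"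
    using roots_subset by force
  then show False
    using assms(2) zero \<beta> by (auto simp: regular_set_def)
qed

lemma energy_le:
  assumes "0 < t" and "\<And>w. w \<in> refl_group_set R \<Longrightarrow> c w \<le> M"
  shows "(\<Sum>w\<in>refl_group_set R. u w * (c w * u w - (\<Sum>\<alpha>\<in>Rp. \<kappa> \<alpha> * (u w - u (refl \<alpha> \<circ> w))) / t))
    \<le> M * (\<Sum>w\<in>refl_group_set R. (u w)\<^sup>2)"
proof -
  let ?W = "refl_group_set R"
  have "0 \<le> (\<Sum>w\<in>?W. u w * (u w - u (refl \<alpha> \<circ> w)))" if "\<alpha> \<in> Rp" for \<alpha>
  proof (rule sum_mult_diff_involution_nonneg[OF finite_refl_group])
    show "refl \<alpha> \<circ> w \<in> ?W" if "w \<in> ?W" for w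
      using that \<open>\<alpha> \<in> Rp\<close> positive_roots_subset by (auto intro: refl_group_set.step)
    show "refl \<alpha> \<circ> (refl \<alpha> \<circ> w) = w" for w
      using \<open>\<alpha> \<in> Rp\<close> by (auto simp: fun_eq_iff refl_refl)
  qed
  then have "0 \<le> (\<Sum>\<alpha>\<in>Rp. \<kappa> \<alpha> * (\<Sum>w\<in>?W. u w * (u w - u (refl \<alpha> \<circ> w))))"
    using multiplicity_nonneg by (auto intro!: sum_nonneg)
  also have "\<dots> = (\<Sum>w\<in>?W. u w * (\<Sum>\<alpha>\<in>Rp. \<kappa> \<alpha> * (u w - u (refl \<alpha> \<circ> w))))"
    by (simp add: sum_distrib_left sum.swap[of _ Rp] algebra_simps)
  finally have "(\<Sum>w\<in>?W. u w * (c w * u w - (\<Sum>\<alpha>\<in>Rp. \<kappa> \<alpha> * (u w - u (refl \<alpha> \<circ> w))) / t))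
      \<le> (\<Sum>w\<in>?W. c w * (u w)\<^sup>2)"
    using assms(1)
    by (simp add: right_diff_distrib sum_subtractf sum_divide_distrib[symmetric] power2_eq_square
        mult.left_commute)
  also have "\<dots> \<le> (\<Sum>w\<in>?W. M * (u w)\<^sup>2)"
    using assms(2) by (intro sum_mono mult_right_mono) auto
  finally show ?thesis
    by (simp add: sum_distrib_left)
qed

lemma dunkl_eigenfunction_along_ray:
  assumes eigen: "\<And>\<xi> x. x \<in> regular_set Rp \<Longrightarrow> dunkl_op Rp \<kappa> \<xi> g x = (\<xi> \<bullet> y) * g x"
    and p: "p \<in> regular_set Rp" and t: "0 < t"
  shows "frechet_derivative g (at (t *\<^sub>R p)) p
    = (p \<bullet> y) * g (t *\<^sub>R p) - (\<Sum>\<alpha>\<in>Rp. \<kappa> \<alpha> * (g (t *\<^sub>R p) - g (t *\<^sub>R refl \<alpha> p))) / t"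
proof -
  have "t *\<^sub>R p \<in> regular_set Rp"
    using p t by (auto simp: regular_set_def)
  then show ?thesis
    using eigen[of "t *\<^sub>R p" p] dunkl_op_along_ray[OF p, where t=t and g=g] t by simp
qed

text \<open>The energy \<open>S t = (\<Sum>w\<in>W. g (t w x\<^sub>0)\<^sup>2)\<close> over the orbit of a regular point grows at most
  exponentially by \<open>energy_le\<close> and vanishes at \<open>t = 0\<close>, hence it vanishes identically.\<close>

lemma eq_0_if_dunkl_eigenfunction:
  assumes C1: "C1_fun g" and g0: "g 0 = 0"
    and eigen: "\<And>\<xi> x. x \<in> regular_set Rp \<Longrightarrow> dunkl_op Rp \<kappa> \<xi> g x = (\<xi> \<bullet> y) * g x"
  shows "g x = 0"
proof -
  have diff: "g differentiable (at p)" for p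
    using C1 unfolding C1_fun_def by blast
  have "continuous_on UNIV g"
    by (rule continuous_at_imp_continuous_on) (auto intro!: differentiable_imp_continuous_within diff)
  then show ?thesis
  proof (rule continuous_eq_0_if_eq_0_on_regular)
    fix x0 assume x0: "x0 \<in> regular_set Rp"
    let ?W = "refl_group_set R"
    define u where "u w t = g (t *\<^sub>R w x0)" for w t
    define u' where "u' w t = frechet_derivative g (at (t *\<^sub>R w x0)) (w x0)" for w t
    define S where "S t = (\<Sum>w\<in>?W. (u w t)\<^sup>2)" for t
    define M where "M = (\<Sum>w\<in>?W. \<bar>w x0 \<bullet> y\<bar>)"
    have M_bound: "w x0 \<bullet> y \<le> M" if "w \<in> ?W" for w
      unfolding M_def
      by (rule order_trans[OF abs_ge_self member_le_sum[OF that _ finite_refl_group]]) simp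
    have u': "(u w has_real_derivative u' w t) (at t)" for w t
      unfolding u_def[abs_def] u'_def by (rule has_real_derivative_along_ray[OF diff])
    have ode: "u' w t = (w x0 \<bullet> y) * u w t - (\<Sum>\<alpha>\<in>Rp. \<kappa> \<alpha> * (u w t - u (refl \<alpha> \<circ> w) t)) / t"
      if "w \<in> ?W" and "0 < t" for w t
      using dunkl_eigenfunction_along_ray[OF eigen refl_group_preserves_regular[OF that(1) x0] that(2)]
      by (simp add: u_def u'_def)
    have "S 1 \<le> 0"
    proof (rule nonpos_if_deriv_le_linear)
      show "(S has_real_derivative (\<Sum>w\<in>?W. 2 * u w t * u' w t)) (at t)" for t
        unfolding S_def[abs_def]
        by (rule DERIV_sum) (auto intro!: derivative_eq_intros u' simp: power2_eq_square)
      fix t :: real assume t: "0 < t" "t < 1"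
      have "(\<Sum>w\<in>?W. 2 * u w t * u' w t) = 2 * (\<Sum>w\<in>?W. u w t
          * ((w x0 \<bullet> y) * u w t - (\<Sum>\<alpha>\<in>Rp. \<kappa> \<alpha> * (u w t - u (refl \<alpha> \<circ> w) t)) / t))"
        using ode t by (simp add: sum_distrib_left mult.assoc)
      also have "\<dots> \<le> 2 * (M * S t)"
        unfolding S_def by (intro mult_left_mono energy_le t M_bound) auto
      finally show "(\<Sum>w\<in>?W. 2 * u w t * u' w t) \<le> 2 * M * S t"
        by simp
    qed (simp add: S_def u_def g0)
    moreover have "(u id 1)\<^sup>2 \<le> S 1"
      unfolding S_def by (rule member_le_sum) (auto intro: refl_group_set.id_in[unfolded id_def] finite_refl_group)
    moreover have "u id 1 = g x0"
      by (simp add: u_def)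
    ultimately have "(g x0)\<^sup>2 \<le> 0"
      by (metis order_trans)
    then show "g x0 = 0"
      by simp
  qed
qed

lemma dunkl_kernel_eq_orthogonal_dunkl_kernel: "dunkl_kernel Rp \<kappa> = orthogonal_dunkl_kernel"
  unfolding dunkl_kernel_def
proof (rule the_equality)
  show "\<forall>y. C1_fun (\<lambda>x. orthogonal_dunkl_kernel x y) \<and> orthogonal_dunkl_kernel 0 y = 1 \<and>
      (\<forall>\<xi>. \<forall>x\<in>regular_set Rp.
        dunkl_op Rp \<kappa> \<xi> (\<lambda>z. orthogonal_dunkl_kernel z y) x = (\<xi> \<bullet> y) * orthogonal_dunkl_kernel x y)"
    using C1_orthogonal_dunkl_kernel orthogonal_dunkl_kernel_0 orthogonal_dunkl_kernel_eigenfunction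
    by blast
next
  fix E assume E: "\<forall>y. C1_fun (\<lambda>x. E x y) \<and> E 0 y = 1 \<and>
      (\<forall>\<xi>. \<forall>x\<in>regular_set Rp. dunkl_op Rp \<kappa> \<xi> (\<lambda>z. E z y) x = (\<xi> \<bullet> y) * E x y)"
  show "E = orthogonal_dunkl_kernel"
  proof (intro ext)
    fix x y
    let ?g = "\<lambda>z. E z y - orthogonal_dunkl_kernel z y"
    have C1_E: "C1_fun (\<lambda>z. E z y)"
      using E by blast
    have "?g x = 0"
    proof (rule eq_0_if_dunkl_eigenfunction[where g="?g" and y=y])
      show "C1_fun ?g"
        using C1_E C1_orthogonal_dunkl_kernel[of y] by (rule C1_fun_diff)
      show "?g 0 = 0"
        using E orthogonal_dunkl_kernel_0 by simp
      show "dunkl_op Rp \<kappa> \<xi> ?g z = (\<xi> \<bullet> y) * ?g z" if "z \<in> regular_set Rp" for \<xi> z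
        using E that C1_E C1_orthogonal_dunkl_kernel[of y] orthogonal_dunkl_kernel_eigenfunction[OF that]
        by (simp add: dunkl_op_diff C1_fun_def right_diff_distrib)
    qed
    then show "E x y = orthogonal_dunkl_kernel x y"
      by simp
  qed
qed

end

section \<open>Reflection groups isomorphic to \<open>\<int>\<^sub>2\<^sup>d\<close>\<close>

lemma refl_group_commute:
  assumes "refl_group R \<cong> Z2_pow d" and "a \<in> refl_group_set R" and "b \<in> refl_group_set R"
  shows "a \<circ> b = b \<circ> a"
proof -
  obtain h where h: "h \<in> iso (refl_group R) (Z2_pow d)"
    using assms(1) unfolding is_iso_def by blast
  then have hom: "h (x \<circ> y) = h x \<otimes>\<^bsub>Z2_pow d\<^esub> h y"
    if "x \<in> refl_group_set R" "y \<in> refl_group_set R" for x y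
    using that by (auto simp: iso_def hom_def refl_group_def)
  have "h (a \<circ> b) = h (b \<circ> a)"
    using hom[OF assms(2,3)] hom[OF assms(3,2)] by (simp add: Z2_pow_def add.commute)
  moreover have "inj_on h (refl_group_set R)"
    using h by (auto simp: iso_def bij_betw_def refl_group_def)
  ultimately show ?thesis
    using assms(2,3) refl_group_set_comp by (meson inj_on_def)
qed

lemma finite_refl_group_set_if_iso:
  assumes "refl_group R \<cong> Z2_pow d"
  shows "finite (refl_group_set R)"
  using iso_finite[OF assms]
  by (auto simp: refl_group_def Z2_pow_def carrier_integer_mod_group intro!: finite_PiE)

text \<open>If \<open>r\<^sub>\<alpha>\<close> and \<open>r\<^sub>\<beta>\<close> commute then \<open>r\<^sub>\<alpha> (r\<^sub>\<beta> \<beta>) = r\<^sub>\<beta> (r\<^sub>\<alpha> \<beta>)\<close> forces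
  \<open>2 (\<alpha> \<bullet> \<beta>) \<alpha> = (\<alpha> \<bullet> \<beta>)\<^sup>2 \<beta>\<close>, so \<open>\<alpha> \<bullet> \<beta> = 0\<close> unless \<alpha> and \<beta> are proportional.\<close>

lemma commuting_reflections_orthogonal:
  assumes R: "root_system R" and norm: "\<forall>\<alpha>\<in>R. (norm \<alpha>)\<^sup>2 = 2"
    and \<alpha>: "\<alpha> \<in> R" and \<beta>: "\<beta> \<in> R" and comm: "refl \<alpha> \<circ> refl \<beta> = refl \<beta> \<circ> refl \<alpha>"
    and "\<beta> \<noteq> \<alpha>" and "\<beta> \<noteq> - \<alpha>"
  shows "\<alpha> \<bullet> \<beta> = 0"
proof (rule ccontr)
  let ?c = "\<alpha> \<bullet> \<beta>"
  assume c: "?c \<noteq> 0"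
  have "\<alpha> \<bullet> \<alpha> = 2" "\<beta> \<bullet> \<beta> = 2"
    using norm \<alpha> \<beta> by (auto simp: power2_norm_eq_inner)
  moreover have "refl \<alpha> (refl \<beta> \<beta>) = refl \<beta> (refl \<alpha> \<beta>)"
    using comm by (metis comp_apply)
  ultimately have "?c *\<^sub>R \<alpha> + ?c *\<^sub>R \<alpha> = (?c * ?c) *\<^sub>R \<beta>"
    by (simp add: refl_eq_inner_self_2 inner_diff_right inner_commute algebra_simps scaleR_2)
  then have "(2 * ?c) *\<^sub>R \<alpha> = (?c * ?c) *\<^sub>R \<beta>"
    by (metis scaleR_2 scaleR_scaleR)
  then have "(1 / (2 * ?c)) *\<^sub>R ((2 * ?c) *\<^sub>R \<alpha>) = (1 / (2 * ?c)) *\<^sub>R ((?c * ?c) *\<^sub>R \<beta>)"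
    by simp
  then have "\<alpha> = (?c / 2) *\<^sub>R \<beta>"
    using c by simp
  moreover have "?c / 2 = 1 \<or> ?c / 2 = -1"
    using R \<alpha> \<beta> \<open>\<alpha> = (?c / 2) *\<^sub>R \<beta>\<close> unfolding root_system_def by metis
  ultimately show False
    using assms(6,7) by auto
qed

lemma orthogonal_dunkl_group_if_iso_Z2:
  fixes R Rp :: "'a::euclidean_space set"
  assumes R: "root_system R" and norm: "\<forall>\<alpha>\<in>R. (norm \<alpha>)\<^sup>2 = 2"
    and Rp: "positive_subsystem R Rp" and \<kappa>: "multiplicity_function R \<kappa>"
    and iso: "refl_group R \<cong> Z2_pow d"
  shows "orthogonal_dunkl_group Rp \<kappa> R"
proof
  have Rp_sub: "Rp \<subseteq> R" and R_eq: "R = Rp \<union> uminus ` Rp" and disj: "Rp \<inter> uminus ` Rp = {}"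
    using Rp unfolding positive_subsystem_def by auto
  show "finite Rp"
    using R Rp_sub finite_subset unfolding root_system_def by blast
  show "\<beta> \<bullet> \<beta> = 2" if "\<beta> \<in> Rp" for \<beta>
    using norm Rp_sub that by (auto simp: power2_norm_eq_inner)
  show "\<beta> \<bullet> \<gamma> = 0" if "\<beta> \<in> Rp" "\<gamma> \<in> Rp" "\<beta> \<noteq> \<gamma>" for \<beta> \<gamma>
  proof (rule commuting_reflections_orthogonal[OF R norm])
    show "\<beta> \<in> R" "\<gamma> \<in> R"
      using that Rp_sub by auto
    then show "refl \<beta> \<circ> refl \<gamma> = refl \<gamma> \<circ> refl \<beta>"
      by (intro refl_group_commute[OF iso] refl_in_refl_group_set)
    show "\<gamma> \<noteq> \<beta>" "\<gamma> \<noteq> - \<beta>"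
      using that disj by auto
  qed
  show "0 \<le> \<kappa> \<beta>" if "\<beta> \<in> Rp" for \<beta>
    using \<kappa> Rp_sub that unfolding multiplicity_function_def by auto
  show "Rp \<subseteq> R" "R \<subseteq> Rp \<union> uminus ` Rp"
    using Rp_sub R_eq by auto
  show "\<forall>\<alpha>\<in>R. refl \<alpha> ` R = R"
    using R unfolding root_system_def by simp
  show "finite (refl_group_set R)"
    using iso by (rule finite_refl_group_set_if_iso)
qed

section \<open>The heat kernel bound\<close>

lemma kernel_ridge_dunkl_term:
  assumes "s \<noteq> 0"
  shows "2 * kernel_ridge_deriv2 \<kappa> y \<beta> s + 2 * \<kappa> \<beta> * (2 * kernel_ridge_deriv \<kappa> y \<beta> s / s
      - (kernel_ridge \<kappa> y \<beta> s - kernel_ridge \<kappa> y \<beta> (- s)) / s\<^sup>2)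
    = 2 * ((\<beta> \<bullet> y) / 2)\<^sup>2 * rank1_log_laplacian (\<kappa> \<beta>) ((\<beta> \<bullet> y) / 2 * s)"
proof (cases "\<beta> \<bullet> y = 0")
  case True
  then show ?thesis
    by (simp add: kernel_ridge_def kernel_ridge_deriv_def kernel_ridge_deriv2_def)
next
  case False
  with assms show ?thesis
    by (simp add: kernel_ridge_def kernel_ridge_deriv_def kernel_ridge_deriv2_def
        rank1_log_laplacian_def field_simps power2_eq_square)
qed

lemma macdonald_const_nonneg: "0 \<le> macdonald_const Rp \<kappa>"
proof (cases "(\<lambda>x::'a. exp (- (norm x)\<^sup>2 / 2) * dunkl_weight Rp \<kappa> x) integrable_on UNIV")
  case True
  then show ?thesis
    unfolding macdonald_const_def
    by (rule integral_nonneg) (auto simp: dunkl_weight_def intro!: mult_nonneg_nonneg prod_nonneg)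
qed (simp add: macdonald_const_def not_integrable_integral)

context orthogonal_dunkl
begin

lemma dunkl_laplacian_ridge_fun_kernel_ridge:
  "dunkl_laplacian Rp \<kappa> (ridge_fun C a w (kernel_ridge \<kappa> w)) x
    = - 2 * a * (real DIM('a) + 2 * lambda_k Rp \<kappa>)
      + (\<Sum>\<alpha>\<in>Rp. 2 * ((\<alpha> \<bullet> w) / 2)\<^sup>2 * rank1_log_laplacian (\<kappa> \<alpha>) ((\<alpha> \<bullet> w) / 2 * (\<alpha> \<bullet> x)))"
proof (rule dunkl_laplacian_eqI)
  fix z assume z: "z \<in> regular_set Rp"
  have "\<alpha> \<bullet> z \<noteq> 0" if "\<alpha> \<in> Rp" for \<alpha>
    using z that by (auto simp: regular_set_def)
  then show "dunkl_laplacian_raw Rp \<kappa> (ridge_fun C a w (kernel_ridge \<kappa> w)) z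
    = - 2 * a * (real DIM('a) + 2 * lambda_k Rp \<kappa>)
      + (\<Sum>\<alpha>\<in>Rp. 2 * ((\<alpha> \<bullet> w) / 2)\<^sup>2 * rank1_log_laplacian (\<kappa> \<alpha>) ((\<alpha> \<bullet> w) / 2 * (\<alpha> \<bullet> z)))"
    unfolding dunkl_laplacian_raw_ridge_fun[OF kernel_ridge_has_derivative
        kernel_ridge_deriv_has_derivative z]
    by (simp add: kernel_ridge_dunkl_term)
next
  have "isCont (\<lambda>z. rank1_log_laplacian (\<kappa> \<alpha>) ((\<alpha> \<bullet> w) / 2 * (\<alpha> \<bullet> z))) z" if "\<alpha> \<in> Rp" for \<alpha> z
    using isCont_rank1_log_laplacian[OF multiplicity_nonneg[OF that]]
    by (rule isCont_o2[rotated]) (intro continuous_intros)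
  then show "isCont (\<lambda>z. - 2 * a * (real DIM('a) + 2 * lambda_k Rp \<kappa>)
      + (\<Sum>\<alpha>\<in>Rp. 2 * ((\<alpha> \<bullet> w) / 2)\<^sup>2 * rank1_log_laplacian (\<kappa> \<alpha>) ((\<alpha> \<bullet> w) / 2 * (\<alpha> \<bullet> z)))) z" for z
    by (auto intro!: continuous_intros)
qed

lemma neg_dunkl_laplacian_ridge_fun_kernel_ridge_le:
  "- dunkl_laplacian Rp \<kappa> (ridge_fun C a w (kernel_ridge \<kappa> w)) x
    \<le> 2 * a * (real DIM('a) + 2 * lambda_k Rp \<kappa>)"
  unfolding dunkl_laplacian_ridge_fun_kernel_ridge
  using rank1_log_laplacian_nonneg multiplicity_nonneg by (auto intro!: sum_nonneg)

end

context orthogonal_dunkl_group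
begin

text \<open>Up to the Gaussian factor, the heat kernel is the Dunkl kernel at \<open>(x, y / (2 t))\<close>.\<close>

lemma ln_dunkl_heat_kernel:
  fixes t :: real and y :: 'a
  assumes t: "0 < t" and c: "0 < macdonald_const Rp \<kappa>"
  defines "A \<equiv> (2 * t) powr (- (real DIM('a) / 2 + lambda_k Rp \<kappa>)) / macdonald_const Rp \<kappa>"
    and "w \<equiv> (1 / (2 * t)) *\<^sub>R y"
  shows "ln (dunkl_heat_kernel Rp \<kappa> t z y)
    = ridge_fun (ln A - (norm y)\<^sup>2 / (4 * t)) (1 / (4 * t)) w (kernel_ridge \<kappa> w) z"
proof -
  have A_pos: "0 < A"
    using t c by (simp add: A_def)
  define r where "r = sqrt (2 * t)"
  have r: "0 < r" "r * r = 2 * t"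
    using t by (auto simp: r_def)
  have arg: "(\<beta> \<bullet> (y /\<^sub>R r)) / 2 * (\<beta> \<bullet> (z /\<^sub>R r)) = (\<beta> \<bullet> w) / 2 * (\<beta> \<bullet> z)" for \<beta>
    using r by (simp add: w_def field_simps)
  have inner: "(z /\<^sub>R r) \<bullet> (y /\<^sub>R r) = z \<bullet> w"
    using r by (simp add: w_def field_simps)
  have ridge: "kernel_ridge \<kappa> (y /\<^sub>R r) \<beta> (\<beta> \<bullet> (z /\<^sub>R r)) = kernel_ridge \<kappa> w \<beta> (\<beta> \<bullet> z)" for \<beta>
    unfolding kernel_ridge_def arg ..
  have "dunkl_heat_kernel Rp \<kappa> t z y = A * exp (- ((norm z)\<^sup>2 + (norm y)\<^sup>2) / (4 * t))
      * exp (ridge_fun 0 0 (y /\<^sub>R r) (kernel_ridge \<kappa> (y /\<^sub>R r)) (z /\<^sub>R r))"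
    by (simp add: dunkl_heat_kernel_def dunkl_kernel_eq_orthogonal_dunkl_kernel
        orthogonal_dunkl_kernel_def A_def r_def)
  then have "ln (dunkl_heat_kernel Rp \<kappa> t z y) = ln A + - ((norm z)\<^sup>2 + (norm y)\<^sup>2) / (4 * t)
      + ridge_fun 0 0 (y /\<^sub>R r) (kernel_ridge \<kappa> (y /\<^sub>R r)) (z /\<^sub>R r)"
    using A_pos by (simp add: ln_mult)
  also have "\<dots> = ridge_fun (ln A - (norm y)\<^sup>2 / (4 * t)) (1 / (4 * t)) w (kernel_ridge \<kappa> w) z"
    unfolding ridge_fun_def inner ridge using t by (simp add: power2_norm_eq_inner field_simps)
  finally show ?thesis .
qed

text \<open>If the Macdonald constant vanishes, the heat kernel is \<open>0\<close> and its logarithm is the junk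
  value \<open>ln 0 = 0\<close>, which is also a ridge function.\<close>

lemma ln_dunkl_heat_kernel_ridge_fun:
  assumes t: "0 < t"
  shows "\<exists>C a w. (\<lambda>z. ln (dunkl_heat_kernel Rp \<kappa> t z y)) = ridge_fun C a w (kernel_ridge \<kappa> w)
    \<and> 0 \<le> a \<and> a \<le> 1 / (4 * t)"
proof (cases "macdonald_const Rp \<kappa> = 0")
  case True
  have "ridge_fun 0 0 0 (kernel_ridge \<kappa> 0) z = 0" for z
    by (simp add: ridge_fun_def kernel_ridge_def)
  with True t show ?thesis
    by (intro exI[of _ 0]) (auto simp: dunkl_heat_kernel_def)
next
  case False
  then have "0 < macdonald_const Rp \<kappa>"
    using macdonald_const_nonneg[of Rp \<kappa>] by simp
  with t show ?thesis
    by (intro exI conjI ext, rule ln_dunkl_heat_kernel) simp_all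
qed

end

theorem theorem1p1:
  fixes R Rp :: "'a::euclidean_space set" and \<kappa> :: "'a \<Rightarrow> real"
  assumes "root_system R"
    and "\<forall>\<alpha>\<in>R. (norm \<alpha>)\<^sup>2 = 2"
    and "positive_subsystem R Rp"
    and "multiplicity_function R \<kappa>"
    and "refl_group R \<cong> Z2_pow DIM('a)"
  shows "\<forall>t>0. \<forall>x y::'a.
    - dunkl_laplacian Rp \<kappa> (\<lambda>z. ln (dunkl_heat_kernel Rp \<kappa> t z y)) x
      \<le> (real DIM('a) + 2 * lambda_k Rp \<kappa>) / (2 * t)"
proof (intro allI impI)
  fix t :: real and x y :: 'a
  assume t: "0 < t"
  interpret orthogonal_dunkl_group Rp \<kappa> R
    using assms by (rule orthogonal_dunkl_group_if_iso_Z2)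
  obtain C a w where ln_p: "(\<lambda>z. ln (dunkl_heat_kernel Rp \<kappa> t z y)) = ridge_fun C a w (kernel_ridge \<kappa> w)"
    and a: "0 \<le> a" "a \<le> 1 / (4 * t)"
    using ln_dunkl_heat_kernel_ridge_fun[OF t] by blast
  have "- dunkl_laplacian Rp \<kappa> (\<lambda>z. ln (dunkl_heat_kernel Rp \<kappa> t z y)) x
      \<le> 2 * a * (real DIM('a) + 2 * lambda_k Rp \<kappa>)"
    unfolding ln_p by (rule neg_dunkl_laplacian_ridge_fun_kernel_ridge_le)
  also have "\<dots> \<le> 2 * (1 / (4 * t)) * (real DIM('a) + 2 * lambda_k Rp \<kappa>)"
    using a lambda_k_nonneg by (intro mult_right_mono) auto
  also have "\<dots> = (real DIM('a) + 2 * lambda_k Rp \<kappa>) / (2 * t)"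
    by simp
  finally show "- dunkl_laplacian Rp \<kappa> (\<lambda>z. ln (dunkl_heat_kernel Rp \<kappa> t z y)) x
      \<le> (real DIM('a) + 2 * lambda_k Rp \<kappa>) / (2 * t)" .
qed

end
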